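(* Let $H$ be a connected block graph with at least one edge, and define a vertex set $R\subseteq V(H)$ as follows. (1) If $H$ is a clique or a star, $R=V(H)$. (2) Otherwise, if $H$ has a leaf block $Q$ with $|V(Q)|\ge 3$, $R=V(Q)$. (3) Otherwise, $H$ is pointed; let $Q$ be a near-leaf block of $H$, and let $v$ be the anchor of $Q$ if it exists and otherwise any cut-vertex of $Q$. (3a) If $Q$ contains exactly two cut-vertices, let $u$ be the other one and $R=V(Q_u)$. (3b) Otherwise let $u,w$ be distinct cut-vertices in $V(Q)\setminus\{v\}$, and let $S^u,S^w$ be the sets of degree-one vertices adjacent to $u$, respectively $w$; set $R=V(Q_{u,w})\setminus\{v\}$ if $Q$ contains exactly three cut-vertices, and $R=S^u\cup S^w\cup\{u,w\}$ otherwise. Then $\operatorname{cobox}(H\setminus R)\le \operatorname{cobox}(H)-1$, where $H\setminus R$ is the subgraph induced on $V(H)\setminus R$.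
   Context: All graphs are finite and simple; big ants and neighbourhoods are taken in $H$. A block is a maximal connected subgraph with no cut-vertex of its own; a block graph is one whose blocks are all complete. A cut-vertex is a vertex whose removal increases the number of connected components. A block is a leaf block if it contains exactly one cut-vertex, an internal block if it contains at least two, and an edge block if it has exactly two vertices; two distinct blocks are neighbours if they share a vertex. A graph is pointed if all its leaf blocks are edge blocks. An internal block $Q$ is a near-leaf block if either all neighbours of $Q$ are leaf blocks, or all internal block neighbours of $Q$ share with $Q$ one and the same cut-vertex, called the anchor of $Q$. For a clique $Q$ and $u,v\in V(Q)$, the big ant is $Q_{u,v}=\big(V(Q)\cup N_H(u)\cup N_H(v),\ E(Q)\cup\delta_H(u)\cup\delta_H(v)\big)$, $Q_u=Q_{u,u}$, where $N_H(x)$ and $\delta_H(x)$ are the neighbourhood and incident edge set of $x$. The co-boxicity $\operatorname{cobox}(G)$ is the boxicity of the complement of $G$; equivalently, the minimum number of co-interval subgraphs of $G$ whose edge sets cover $E(G)$ (so it is $0$ for edgeless graphs), where a graph is co-interval if its vertices can be assigned closed real intervals such that two vertices are adjacent iff their intervals are disjoint. *)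

theory Defs
  imports Complex_Main
begin

text \<open>A graph is given by a finite vertex set V and an adjacency relation E;
  all notions below are relative to V (E is only consulted between vertices of V),
  so an induced subgraph on W \<subseteq> V is simply (W, E).\<close>

definition sgraph :: "'a set \<Rightarrow> ('a \<Rightarrow> 'a \<Rightarrow> bool) \<Rightarrow> bool" where
  "sgraph V E \<longleftrightarrow> finite V \<and> (\<forall>x y. E x y \<longrightarrow> E y x) \<and> (\<forall>x. \<not> E x x)
     \<and> (\<forall>x y. E x y \<longrightarrow> x \<in> V \<and> y \<in> V)"

definition adj_in :: "'a set \<Rightarrow> ('a \<Rightarrow> 'a \<Rightarrow> bool) \<Rightarrow> 'a \<Rightarrow> 'a \<Rightarrow> bool" where
  "adj_in V E x y \<longleftrightarrow> x \<in> V \<and> y \<in> V \<and> E x y"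

definition edges :: "'a set \<Rightarrow> ('a \<Rightarrow> 'a \<Rightarrow> bool) \<Rightarrow> 'a set set" where
  "edges V E = {{x, y} | x y. adj_in V E x y}"

definition nbhd :: "'a set \<Rightarrow> ('a \<Rightarrow> 'a \<Rightarrow> bool) \<Rightarrow> 'a \<Rightarrow> 'a set" where
  "nbhd V E u = {x \<in> V. adj_in V E u x}"

definition degree :: "'a set \<Rightarrow> ('a \<Rightarrow> 'a \<Rightarrow> bool) \<Rightarrow> 'a \<Rightarrow> nat" where
  "degree V E u = card (nbhd V E u)"

definition graph_connected :: "'a set \<Rightarrow> ('a \<Rightarrow> 'a \<Rightarrow> bool) \<Rightarrow> bool" where
  "graph_connected V E \<longleftrightarrow> V \<noteq> {} \<and> (\<forall>x\<in>V. \<forall>y\<in>V. (adj_in V E)\<^sup>*\<^sup>* x y)"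

definition ncomp :: "'a set \<Rightarrow> ('a \<Rightarrow> 'a \<Rightarrow> bool) \<Rightarrow> nat" where
  "ncomp V E = card ((\<lambda>x. {y \<in> V. (adj_in V E)\<^sup>*\<^sup>* x y}) ` V)"

definition cut_vertex :: "'a set \<Rightarrow> ('a \<Rightarrow> 'a \<Rightarrow> bool) \<Rightarrow> 'a \<Rightarrow> bool" where
  "cut_vertex V E v \<longleftrightarrow> v \<in> V \<and> ncomp (V - {v}) E > ncomp V E"

definition no_cut_vertex :: "'a set \<Rightarrow> ('a \<Rightarrow> 'a \<Rightarrow> bool) \<Rightarrow> bool" where
  "no_cut_vertex B E \<longleftrightarrow> (\<forall>x\<in>B. \<not> cut_vertex B E x)"

text \<open>Blocks, represented by their vertex sets (a maximal subgraph with the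
  property is necessarily induced).\<close>
definition is_block :: "'a set \<Rightarrow> ('a \<Rightarrow> 'a \<Rightarrow> bool) \<Rightarrow> 'a set \<Rightarrow> bool" where
  "is_block V E B \<longleftrightarrow> B \<subseteq> V \<and> graph_connected B E \<and> no_cut_vertex B E \<and>
     (\<forall>B'. B \<subseteq> B' \<and> B' \<subseteq> V \<and> graph_connected B' E \<and> no_cut_vertex B' E \<longrightarrow> B' = B)"

definition is_clique :: "'a set \<Rightarrow> ('a \<Rightarrow> 'a \<Rightarrow> bool) \<Rightarrow> bool" where
  "is_clique V E \<longleftrightarrow> (\<forall>x\<in>V. \<forall>y\<in>V. x \<noteq> y \<longrightarrow> E x y)"

definition is_star :: "'a set \<Rightarrow> ('a \<Rightarrow> 'a \<Rightarrow> bool) \<Rightarrow> bool" where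
  "is_star V E \<longleftrightarrow> (\<exists>c\<in>V. \<forall>x\<in>V. x \<noteq> c \<longrightarrow> E c x \<and> (\<forall>y\<in>V. E x y \<longrightarrow> y = c))"

definition block_graph :: "'a set \<Rightarrow> ('a \<Rightarrow> 'a \<Rightarrow> bool) \<Rightarrow> bool" where
  "block_graph V E \<longleftrightarrow> (\<forall>B. is_block V E B \<longrightarrow> is_clique B E)"

definition cutvs_in :: "'a set \<Rightarrow> ('a \<Rightarrow> 'a \<Rightarrow> bool) \<Rightarrow> 'a set \<Rightarrow> 'a set" where
  "cutvs_in V E Q = {c \<in> Q. cut_vertex V E c}"

definition leaf_block :: "'a set \<Rightarrow> ('a \<Rightarrow> 'a \<Rightarrow> bool) \<Rightarrow> 'a set \<Rightarrow> bool" where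
  "leaf_block V E Q \<longleftrightarrow> is_block V E Q \<and> card (cutvs_in V E Q) = 1"

definition internal_block :: "'a set \<Rightarrow> ('a \<Rightarrow> 'a \<Rightarrow> bool) \<Rightarrow> 'a set \<Rightarrow> bool" where
  "internal_block V E Q \<longleftrightarrow> is_block V E Q \<and> card (cutvs_in V E Q) \<ge> 2"

definition edge_block :: "'a set \<Rightarrow> ('a \<Rightarrow> 'a \<Rightarrow> bool) \<Rightarrow> 'a set \<Rightarrow> bool" where
  "edge_block V E Q \<longleftrightarrow> is_block V E Q \<and> card Q = 2"

definition block_neighbours :: "'a set \<Rightarrow> ('a \<Rightarrow> 'a \<Rightarrow> bool) \<Rightarrow> 'a set \<Rightarrow> 'a set \<Rightarrow> bool" where
  "block_neighbours V E Q B \<longleftrightarrow> is_block V E Q \<and> is_block V E B \<and> Q \<noteq> B \<and> Q \<inter> B \<noteq> {}"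

definition pointed :: "'a set \<Rightarrow> ('a \<Rightarrow> 'a \<Rightarrow> bool) \<Rightarrow> bool" where
  "pointed V E \<longleftrightarrow> (\<forall>Q. leaf_block V E Q \<longrightarrow> edge_block V E Q)"

definition near_leaf_block :: "'a set \<Rightarrow> ('a \<Rightarrow> 'a \<Rightarrow> bool) \<Rightarrow> 'a set \<Rightarrow> bool" where
  "near_leaf_block V E Q \<longleftrightarrow> internal_block V E Q \<and>
     ((\<forall>B. block_neighbours V E Q B \<longrightarrow> leaf_block V E B) \<or>
      (\<exists>c. \<forall>B. block_neighbours V E Q B \<and> internal_block V E B \<longrightarrow> B \<inter> Q = {c}))"

definition anchor :: "'a set \<Rightarrow> ('a \<Rightarrow> 'a \<Rightarrow> bool) \<Rightarrow> 'a set \<Rightarrow> 'a \<Rightarrow> bool" where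
  "anchor V E Q c \<longleftrightarrow> near_leaf_block V E Q \<and>
     (\<exists>B. block_neighbours V E Q B \<and> internal_block V E B) \<and>
     (\<forall>B. block_neighbours V E Q B \<and> internal_block V E B \<longrightarrow> B \<inter> Q = {c})"

definition big_ant_vertices ::
  "'a set \<Rightarrow> ('a \<Rightarrow> 'a \<Rightarrow> bool) \<Rightarrow> 'a set \<Rightarrow> 'a \<Rightarrow> 'a \<Rightarrow> 'a set" where
  "big_ant_vertices V E Q u v = Q \<union> nbhd V E u \<union> nbhd V E v"

definition pendant_nbrs :: "'a set \<Rightarrow> ('a \<Rightarrow> 'a \<Rightarrow> bool) \<Rightarrow> 'a \<Rightarrow> 'a set" where
  "pendant_nbrs V E u = {x \<in> nbhd V E u. degree V E x = 1}"

definition cointerval :: "'a set \<Rightarrow> ('a \<Rightarrow> 'a \<Rightarrow> bool) \<Rightarrow> bool" where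
  "cointerval V E \<longleftrightarrow> (\<exists>l r :: 'a \<Rightarrow> real. (\<forall>x\<in>V. l x \<le> r x) \<and>
     (\<forall>x\<in>V. \<forall>y\<in>V. x \<noteq> y \<longrightarrow> (E x y \<longleftrightarrow> r x < l y \<or> r y < l x)))"

definition cobox :: "'a set \<Rightarrow> ('a \<Rightarrow> 'a \<Rightarrow> bool) \<Rightarrow> nat" where
  "cobox V E = (LEAST k. \<exists>(Vs :: nat \<Rightarrow> 'a set) (Es :: nat \<Rightarrow> 'a \<Rightarrow> 'a \<Rightarrow> bool).
      (\<forall>i<k. Vs i \<subseteq> V \<and> (\<forall>x\<in>Vs i. \<forall>y\<in>Vs i. Es i x y \<longrightarrow> E x y) \<and> cointerval (Vs i) (Es i))
      \<and> edges V E \<subseteq> (\<Union>i<k. edges (Vs i) (Es i)))"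

definition admissible_R :: "'a set \<Rightarrow> ('a \<Rightarrow> 'a \<Rightarrow> bool) \<Rightarrow> 'a set \<Rightarrow> bool" where
  "admissible_R V E R \<longleftrightarrow>
    (if is_clique V E \<or> is_star V E then R = V
     else if (\<exists>Q. leaf_block V E Q \<and> card Q \<ge> 3)
     then (\<exists>Q. leaf_block V E Q \<and> card Q \<ge> 3 \<and> R = Q)
     else (\<exists>Q v. near_leaf_block V E Q \<and>
            (if (\<exists>c. anchor V E Q c) then anchor V E Q v
             else v \<in> cutvs_in V E Q) \<and>
            (if card (cutvs_in V E Q) = 2
             then (\<exists>u. u \<in> cutvs_in V E Q \<and> u \<noteq> v \<and> R = big_ant_vertices V E Q u u)
             else (\<exists>u w. u \<noteq> w \<and> u \<in> cutvs_in V E Q - {v} \<and> w \<in> cutvs_in V E Q - {v} \<and>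
                     R = (if card (cutvs_in V E Q) = 3
                          then big_ant_vertices V E Q u w - {v}
                          else pendant_nbrs V E u \<union> pendant_nbrs V E w \<union> {u, w})))))"

end

theory Submission
  imports Defs
begin

text \<open>
  Fix a cover of H by cobox H co-interval subgraphs; it suffices to make one of them superfluous
  on H - R. Co-interval graphs contain no induced 2K2, so a graph of the cover that contains an
  edge of R whose ends have no neighbours outside R has no edge left in H - R: this settles large
  leaf blocks and near-leaf blocks with two cut-vertices. Otherwise every cut-vertex u \<noteq> v of the
  near-leaf block Q carries a pendant edge u p. Away from u and p, a co-interval graph containing
  u p only has edges inside Q and edges leaving Q from one vertex; the edges of two such graphs
  fit into a single co-interval graph in which the vertices of Q are points. With three
  cut-vertices, the graphs through the pendant edges at u and w meet H - R only in a star at v.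
\<close>

lemma mem_edges_iff: "e \<in> edges W F \<longleftrightarrow> (\<exists>x y. e = {x, y} \<and> x \<in> W \<and> y \<in> W \<and> F x y)"
  unfolding edges_def adj_in_def by blast

lemma doubleton_in_edges: "x \<in> W \<Longrightarrow> y \<in> W \<Longrightarrow> F x y \<Longrightarrow> {x, y} \<in> edges W F"
  unfolding mem_edges_iff by blast

lemma edge_subset: "e \<in> edges W F \<Longrightarrow> e \<subseteq> W"
  unfolding mem_edges_iff by blast

lemma edges_Int: "e \<in> edges W F \<Longrightarrow> e \<subseteq> W' \<Longrightarrow> e \<in> edges (W \<inter> W') F"
  unfolding mem_edges_iff by blast

lemma edges_mono: "W \<subseteq> W' \<Longrightarrow> edges W F \<subseteq> edges W' F"
  unfolding edges_def adj_in_def by blast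

lemma doubleton_in_edges_iff:
  "x \<noteq> y \<Longrightarrow> {x, y} \<in> edges W F \<longleftrightarrow> x \<in> W \<and> y \<in> W \<and> (F x y \<or> F y x)"
  unfolding mem_edges_iff doubleton_eq_iff by blast

lemma finite_edges: "finite V \<Longrightarrow> finite (edges V E)"
proof -
  assume "finite V"
  moreover have "edges V E \<subseteq> (\<lambda>(x, y). {x, y}) ` (V \<times> V)"
    unfolding edges_def adj_in_def by auto
  ultimately show ?thesis
    by (meson finite_SigmaI finite_imageI finite_subset)
qed

section \<open>Co-interval graphs\<close>

lemma cointervalE:
  assumes "cointerval W F"
  obtains l r :: "'a \<Rightarrow> real" where "\<And>x. x \<in> W \<Longrightarrow> l x \<le> r x"
    and "\<And>x y. x \<in> W \<Longrightarrow> y \<in> W \<Longrightarrow> x \<noteq> y \<Longrightarrow> F x y \<Longrightarrow> r x < l y \<or> r y < l x"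
    and "\<And>x y. x \<in> W \<Longrightarrow> y \<in> W \<Longrightarrow> x \<noteq> y \<Longrightarrow> \<not> F x y \<Longrightarrow> l x \<le> r y \<and> l y \<le> r x"
  using assms unfolding cointerval_def by (metis (mono_tags) not_less)

lemma cointerval_subset: "cointerval W F \<Longrightarrow> W' \<subseteq> W \<Longrightarrow> cointerval W' F"
  unfolding cointerval_def by blast

lemma cointerval_sym: "cointerval W F \<Longrightarrow> x \<in> W \<Longrightarrow> y \<in> W \<Longrightarrow> x \<noteq> y \<Longrightarrow> F x y \<Longrightarrow> F y x"
  unfolding cointerval_def by metis

lemma cointerval_doubleton: "a \<noteq> b \<Longrightarrow> cointerval {a, b} (\<noteq>)"
  unfolding cointerval_def
  by (rule exI[of _ "\<lambda>x. if x = a then 0 else 1"], rule exI[of _ "\<lambda>x. if x = a then 0 else 1"]) auto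

lemma cointerval_2K2_free:
  assumes "cointerval W F" "a \<in> W" "b \<in> W" "c \<in> W" "d \<in> W" "F a b" "F c d" "a \<noteq> b" "c \<noteq> d"
    and "a \<noteq> c" "a \<noteq> d" "b \<noteq> c" "b \<noteq> d"
  shows "F a c \<or> F a d \<or> F b c \<or> F b d"
proof (rule ccontr)
  assume none: "\<not> (F a c \<or> F a d \<or> F b c \<or> F b d)"
  obtain l r :: "'a \<Rightarrow> real" where "\<And>x. x \<in> W \<Longrightarrow> l x \<le> r x"
    and apart: "\<And>x y. x \<in> W \<Longrightarrow> y \<in> W \<Longrightarrow> x \<noteq> y \<Longrightarrow> F x y \<Longrightarrow> r x < l y \<or> r y < l x"
    and meet: "\<And>x y. x \<in> W \<Longrightarrow> y \<in> W \<Longrightarrow> x \<noteq> y \<Longrightarrow> \<not> F x y \<Longrightarrow> l x \<le> r y \<and> l y \<le> r x"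
    using assms(1) by (elim cointervalE) blast
  moreover have "r a < l b \<or> r b < l a" "r c < l d \<or> r d < l c"
    using apart assms(2-9) by blast+
  moreover have "l a \<le> r c \<and> l c \<le> r a" "l a \<le> r d \<and> l d \<le> r a"
    "l b \<le> r c \<and> l c \<le> r b" "l b \<le> r d \<and> l d \<le> r b"
    using meet none assms(2-5,10-) by blast+
  ultimately show False
    using assms(2-5) by (smt (verit))
qed

text \<open>In the complement, p, q, y form a triangle and u, w, x each see exactly two of its
  vertices; no interval representation has this pattern.\<close>
lemma cointerval_three_edge_obstruction:
  assumes "cointerval W F" "u \<in> W" "p \<in> W" "w \<in> W" "q \<in> W" "x \<in> W" "y \<in> W"
    and "F u p" "F w q" "F x y" "u \<noteq> p" "w \<noteq> q" "x \<noteq> y"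
    and "p \<noteq> w" "p \<noteq> q" "p \<noteq> x" "p \<noteq> y" "q \<noteq> u" "q \<noteq> x" "q \<noteq> y" "u \<noteq> y" "w \<noteq> y"
    and "\<not> F p w" "\<not> F p q" "\<not> F p x" "\<not> F p y" "\<not> F q u" "\<not> F q x" "\<not> F q y" "\<not> F u y" "\<not> F w y"
  shows False
proof -
  obtain l r :: "'a \<Rightarrow> real" where "\<And>x. x \<in> W \<Longrightarrow> l x \<le> r x"
    and apart: "\<And>x y. x \<in> W \<Longrightarrow> y \<in> W \<Longrightarrow> x \<noteq> y \<Longrightarrow> F x y \<Longrightarrow> r x < l y \<or> r y < l x"
    and meet: "\<And>x y. x \<in> W \<Longrightarrow> y \<in> W \<Longrightarrow> x \<noteq> y \<Longrightarrow> \<not> F x y \<Longrightarrow> l x \<le> r y \<and> l y \<le> r x"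
    using assms(1) by (elim cointervalE) blast
  moreover have "r u < l p \<or> r p < l u" "r w < l q \<or> r q < l w" "r x < l y \<or> r y < l x"
    using apart assms(2-13) by blast+
  moreover have "l p \<le> r w \<and> l w \<le> r p" "l p \<le> r q \<and> l q \<le> r p" "l p \<le> r x \<and> l x \<le> r p"
    "l p \<le> r y \<and> l y \<le> r p" "l q \<le> r u \<and> l u \<le> r q" "l q \<le> r x \<and> l x \<le> r q"
    "l q \<le> r y \<and> l y \<le> r q" "l u \<le> r y \<and> l y \<le> r u" "l w \<le> r y \<and> l y \<le> r w"
    using meet assms(2-7,14-) by blast+
  ultimately show False
    using assms(2-7) by (smt (verit))
qed

text \<open>The intervals of y and y' both meet those of c and p, so both cover the gap between them.
  Meeting p but avoiding y resp. y', the interval of x lies beyond that of y and the one of x'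
  beyond that of y', so x cannot meet y' while x' meets y.\<close>
lemma cointerval_crossing_edges_obstruction:
  assumes "cointerval W F" "c \<in> W" "p \<in> W" "x \<in> W" "y \<in> W" "x' \<in> W" "y' \<in> W"
    and "F c p" "F x y" "F x' y'" "c \<noteq> p" "x \<noteq> y" "x' \<noteq> y'"
    and "p \<noteq> x" "p \<noteq> y" "p \<noteq> x'" "p \<noteq> y'" "c \<noteq> y" "c \<noteq> y'" "x \<noteq> y'" "x' \<noteq> y"
    and "\<not> F p x" "\<not> F p y" "\<not> F p x'" "\<not> F p y'" "\<not> F c y" "\<not> F c y'" "\<not> F x y'" "\<not> F x' y"
  shows False
proof -
  obtain l r :: "'a \<Rightarrow> real" where "\<And>x. x \<in> W \<Longrightarrow> l x \<le> r x"
    and apart: "\<And>x y. x \<in> W \<Longrightarrow> y \<in> W \<Longrightarrow> x \<noteq> y \<Longrightarrow> F x y \<Longrightarrow> r x < l y \<or> r y < l x"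
    and meet: "\<And>x y. x \<in> W \<Longrightarrow> y \<in> W \<Longrightarrow> x \<noteq> y \<Longrightarrow> \<not> F x y \<Longrightarrow> l x \<le> r y \<and> l y \<le> r x"
    using assms(1) by (elim cointervalE) blast
  moreover have "r c < l p \<or> r p < l c" "r x < l y \<or> r y < l x" "r x' < l y' \<or> r y' < l x'"
    using apart assms(2-13) by blast+
  moreover have "l p \<le> r x \<and> l x \<le> r p" "l p \<le> r y \<and> l y \<le> r p" "l p \<le> r x' \<and> l x' \<le> r p"
    "l p \<le> r y' \<and> l y' \<le> r p" "l c \<le> r y \<and> l y \<le> r c" "l c \<le> r y' \<and> l y' \<le> r c"
    "l x \<le> r y' \<and> l y' \<le> r x" "l x' \<le> r y \<and> l y \<le> r x'"
    using meet assms(2-7,14-) by blast+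
  ultimately show False
    using assms(2-7) by linarith
qed

lemma cointerval_star: "cointerval W (\<lambda>x y. (x = v \<and> E v y) \<or> (y = v \<and> E v x))"
  unfolding cointerval_def
  by (rule exI[of _ "\<lambda>z. if z = v then 0 else if E v z then 1 else 0"],
      rule exI[of _ "\<lambda>z. if z = v then 0 else 1"]) auto

lemma ex_points_with_ends:
  assumes "finite S"
  obtains pos :: "'a \<Rightarrow> real" where "pos a = 0" "b \<noteq> a \<Longrightarrow> pos b = 3"
    "\<And>x y. x \<in> S \<Longrightarrow> y \<in> S \<Longrightarrow> x \<noteq> y \<Longrightarrow> pos x \<noteq> pos y"
    "\<And>z. z \<in> S \<Longrightarrow> pos z = 0 \<and> z = a \<or> pos z = 3 \<and> z = b \<or> 1 \<le> pos z \<and> pos z \<le> 2"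
proof -
  obtain f :: "'a \<Rightarrow> nat" where "inj_on f S"
    using finite_imp_inj_to_nat_seg[OF assms] by blast
  define g where "g z = 2 - inverse (1 + real (f z))" for z
  have "inj_on g S"
    using \<open>inj_on f S\<close> unfolding g_def inj_on_def by simp
  have g_range: "1 \<le> g z \<and> g z \<le> 2" for z
  proof -
    have "inverse (1 + real (f z)) \<le> 1" "0 \<le> inverse (1 + real (f z))"
      by (auto intro: inverse_le_1_iff[THEN iffD2])
    then show ?thesis unfolding g_def by simp
  qed
  define pos where "pos z = (if z = a then 0 else if z = b then 3 else g z)" for z
  have pos_cases: "pos z = 0 \<and> z = a \<or> pos z = 3 \<and> z = b \<or> 1 \<le> pos z \<and> pos z \<le> 2" for z
    using g_range unfolding pos_def by auto
  show thesis
  proof (rule that[of pos])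
    show "pos a = 0" "b \<noteq> a \<Longrightarrow> pos b = 3" unfolding pos_def by simp_all
    show "pos x \<noteq> pos y" if "x \<in> S" "y \<in> S" "x \<noteq> y" for x y
    proof (cases "x \<in> {a, b} \<or> y \<in> {a, b}")
      case True
      with pos_cases[of x] pos_cases[of y] that(3) show ?thesis
        unfolding pos_def by auto
    next
      case False
      with \<open>inj_on g S\<close> that show ?thesis unfolding pos_def inj_on_def by auto
    qed
  qed (rule pos_cases)
qed

section \<open>Co-interval covers\<close>

definition is_cointerval_cover ::
  "'a set \<Rightarrow> ('a \<Rightarrow> 'a \<Rightarrow> bool) \<Rightarrow> nat \<Rightarrow> (nat \<Rightarrow> 'a set) \<Rightarrow> (nat \<Rightarrow> 'a \<Rightarrow> 'a \<Rightarrow> bool) \<Rightarrow> bool"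
  where "is_cointerval_cover V E k Vs Es \<longleftrightarrow>
    (\<forall>i<k. Vs i \<subseteq> V \<and> (\<forall>x\<in>Vs i. \<forall>y\<in>Vs i. Es i x y \<longrightarrow> E x y) \<and> cointerval (Vs i) (Es i))
    \<and> edges V E \<subseteq> (\<Union>i<k. edges (Vs i) (Es i))"

lemma cobox_eq_Least_cover: "cobox V E = (LEAST k. \<exists>Vs Es. is_cointerval_cover V E k Vs Es)"
  unfolding cobox_def is_cointerval_cover_def ..

lemma cobox_le_cover: "is_cointerval_cover V E k Vs Es \<Longrightarrow> cobox V E \<le> k"
  unfolding cobox_eq_Least_cover by (rule Least_le) blast

lemma cobox_eq_0: "edges V E = {} \<Longrightarrow> cobox V E = 0"
  using cobox_le_cover[of V E 0] unfolding is_cointerval_cover_def by auto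

lemma ex_cointerval_cover:
  assumes "sgraph V E"
  shows "\<exists>k Vs Es. is_cointerval_cover V E k Vs Es"
proof -
  have "finite (edges V E)"
    using assms finite_edges unfolding sgraph_def by blast
  then obtain n and f :: "nat \<Rightarrow> 'a set" where f: "bij_betw f {0..<n} (edges V E)"
    using ex_bij_betw_nat_finite by blast
  have "is_cointerval_cover V E n f (\<lambda>_. (\<noteq>))"
    unfolding is_cointerval_cover_def
  proof (intro conjI allI impI ballI)
    fix i assume "i < n"
    then have "f i \<in> edges V E"
      using f bij_betwE by fastforce
    then obtain a b where ab: "f i = {a, b}" "a \<in> V" "b \<in> V" "E a b"
      unfolding mem_edges_iff by blast
    then have "E b a" "a \<noteq> b"
      using assms unfolding sgraph_def by blast+
    with ab show "f i \<subseteq> V" "cointerval (f i) (\<noteq>)"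
      by (auto simp: cointerval_doubleton)
    fix x y assume "x \<in> f i" "y \<in> f i" "x \<noteq> y"
    with ab \<open>E b a\<close> show "E x y" by auto
  next
    show "edges V E \<subseteq> (\<Union>i<n. edges (f i) (\<noteq>))"
    proof
      fix e assume e: "e \<in> edges V E"
      then obtain i where "i < n" "f i = e"
        using f unfolding bij_betw_def by (metis atLeastLessThan_iff imageE)
      moreover obtain a b where "e = {a, b}" "E a b"
        using e unfolding mem_edges_iff by blast
      moreover have "a \<noteq> b"
        using \<open>E a b\<close> assms unfolding sgraph_def by blast
      ultimately show "e \<in> (\<Union>i<n. edges (f i) (\<noteq>))"
        by (auto intro!: doubleton_in_edges)
    qed
  qed
  then show ?thesis by blast
qed

lemma optimal_cointerval_cover:
  "sgraph V E \<Longrightarrow> \<exists>Vs Es. is_cointerval_cover V E (cobox V E) Vs Es"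
  unfolding cobox_eq_Least_cover by (rule LeastI_ex) (rule ex_cointerval_cover)

lemma cointerval_cover_restrict:
  assumes "is_cointerval_cover V E k Vs Es" "V' \<subseteq> V"
  shows "is_cointerval_cover V' E k (\<lambda>i. Vs i \<inter> V') Es"
  unfolding is_cointerval_cover_def
proof (intro conjI allI impI)
  fix i assume "i < k"
  then have "\<forall>x\<in>Vs i. \<forall>y\<in>Vs i. Es i x y \<longrightarrow> E x y" "cointerval (Vs i) (Es i)"
    using assms(1) unfolding is_cointerval_cover_def by blast+
  then show "Vs i \<inter> V' \<subseteq> V'" "\<forall>x\<in>Vs i \<inter> V'. \<forall>y\<in>Vs i \<inter> V'. Es i x y \<longrightarrow> E x y"
    "cointerval (Vs i \<inter> V') (Es i)"
    by (auto elim: cointerval_subset)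
next
  show "edges V' E \<subseteq> (\<Union>i<k. edges (Vs i \<inter> V') (Es i))"
  proof
    fix e assume e: "e \<in> edges V' E"
    then obtain i where "i < k" "e \<in> edges (Vs i) (Es i)"
      using assms edges_mono unfolding is_cointerval_cover_def by blast
    with edge_subset[OF e] show "e \<in> (\<Union>i<k. edges (Vs i \<inter> V') (Es i))"
      by (blast intro: edges_Int)
  qed
qed

lemma cobox_le_pred_if_redundant:
  assumes cover: "is_cointerval_cover V E k Vs Es" and "i < k"
    and redundant: "\<And>e. e \<in> edges V E \<Longrightarrow> e \<in> edges (Vs i) (Es i) \<Longrightarrow>
      \<exists>j<k. j \<noteq> i \<and> e \<in> edges (Vs j) (Es j)"
  shows "cobox V E \<le> k - 1"
proof -
  define skip where "skip l = (if l < i then l else Suc l)" for l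
  have skip_range: "skip l < k" if "l < k - 1" for l
    using that \<open>i < k\<close> unfolding skip_def by auto
  have skip_onto: "\<exists>l<k - 1. skip l = j" if "j < k" "j \<noteq> i" for j
  proof (cases "j < i")
    case True
    with that \<open>i < k\<close> show ?thesis unfolding skip_def by (intro exI[of _ j]) auto
  next
    case False
    with that show ?thesis unfolding skip_def by (intro exI[of _ "j - 1"]) auto
  qed
  have "is_cointerval_cover V E (k - 1) (Vs \<circ> skip) (Es \<circ> skip)"
    unfolding is_cointerval_cover_def
  proof (intro conjI allI impI)
    fix l assume "l < k - 1"
    then show "(Vs \<circ> skip) l \<subseteq> V" "cointerval ((Vs \<circ> skip) l) ((Es \<circ> skip) l)"
      "\<forall>x\<in>(Vs \<circ> skip) l. \<forall>y\<in>(Vs \<circ> skip) l. (Es \<circ> skip) l x y \<longrightarrow> E x y"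
      using cover skip_range unfolding is_cointerval_cover_def by auto
  next
    show "edges V E \<subseteq> (\<Union>l<k - 1. edges ((Vs \<circ> skip) l) ((Es \<circ> skip) l))"
    proof
      fix e assume e: "e \<in> edges V E"
      then obtain j where "j < k" "e \<in> edges (Vs j) (Es j)"
        using cover unfolding is_cointerval_cover_def by blast
      then obtain j where "j < k" "j \<noteq> i" "e \<in> edges (Vs j) (Es j)"
        using redundant[OF e] by metis
      with skip_onto show "e \<in> (\<Union>l<k - 1. edges ((Vs \<circ> skip) l) ((Es \<circ> skip) l))"
        by fastforce
    qed
  qed
  then show ?thesis by (rule cobox_le_cover)
qed

lemma cointerval_cover_update:
  assumes "is_cointerval_cover V E k Vs Es" "m < k"
    and "W \<subseteq> V" "\<forall>x\<in>W. \<forall>y\<in>W. F x y \<longrightarrow> E x y" "cointerval W F"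
    and "edges (Vs m) (Es m) \<subseteq> edges W F"
  shows "is_cointerval_cover V E k (Vs(m := W)) (Es(m := F))"
  unfolding is_cointerval_cover_def
proof (intro conjI allI impI)
  fix j assume "j < k"
  then show "(Vs(m := W)) j \<subseteq> V" "cointerval ((Vs(m := W)) j) ((Es(m := F)) j)"
    "\<forall>x\<in>(Vs(m := W)) j. \<forall>y\<in>(Vs(m := W)) j. (Es(m := F)) j x y \<longrightarrow> E x y"
    using assms unfolding is_cointerval_cover_def by auto
next
  show "edges V E \<subseteq> (\<Union>j<k. edges ((Vs(m := W)) j) ((Es(m := F)) j))"
  proof
    fix e assume "e \<in> edges V E"
    then obtain j where "j < k" "e \<in> edges (Vs j) (Es j)"
      using assms(1) unfolding is_cointerval_cover_def by blast
    with assms(6) show "e \<in> (\<Union>j<k. edges ((Vs(m := W)) j) ((Es(m := F)) j))"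
      by (cases "j = m") auto
  qed
qed

section \<open>Connectivity and blocks\<close>

lemma reachable_mono: "W \<subseteq> W' \<Longrightarrow> (adj_in W E)\<^sup>*\<^sup>* x y \<Longrightarrow> (adj_in W' E)\<^sup>*\<^sup>* x y"
  by (rule mono_rtranclp[rule_format, of "adj_in W E"]) (auto simp: adj_in_def)

lemma reachable_within_reachable_set:
  assumes "(adj_in W E)\<^sup>*\<^sup>* x y"
  shows "(adj_in {w \<in> W. (adj_in W E)\<^sup>*\<^sup>* x w} E)\<^sup>*\<^sup>* x y"
  using assms
proof (induction rule: rtranclp_induct)
  case (step y z)
  then have "adj_in {w \<in> W. (adj_in W E)\<^sup>*\<^sup>* x w} E y z"
    unfolding adj_in_def by (auto intro: rtranclp.rtrancl_into_rtrancl[of _ x y z])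
  with step.IH show ?case by (rule rtranclp.rtrancl_into_rtrancl)
qed simp

lemma ncomp_connected: "graph_connected W E \<Longrightarrow> ncomp W E = 1"
proof -
  assume conn: "graph_connected W E"
  then have "(\<lambda>x. {y \<in> W. (adj_in W E)\<^sup>*\<^sup>* x y}) ` W = {W}"
    unfolding graph_connected_def by auto
  then show ?thesis unfolding ncomp_def by simp
qed

lemma connected_if_ncomp_le_1:
  assumes "finite W" "W \<noteq> {}" "ncomp W E \<le> 1"
  shows "graph_connected W E"
proof -
  define comp where "comp x = {y \<in> W. (adj_in W E)\<^sup>*\<^sup>* x y}" for x
  have "comp ` W \<noteq> {}" "finite (comp ` W)" using assms(1,2) by simp_all
  then have "card (comp ` W) = 1"
    using assms(3) unfolding ncomp_def comp_def[abs_def]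
    by (simp add: card_gt_0_iff le_eq_less_or_eq)
  then obtain S where S: "comp ` W = {S}"
    using card_1_singletonE by blast
  show ?thesis
    unfolding graph_connected_def
  proof (intro conjI ballI)
    fix x y assume "x \<in> W" "y \<in> W"
    then have "comp x = S" "comp y = S"
      using S by blast+
    moreover have "y \<in> comp y"
      using \<open>y \<in> W\<close> unfolding comp_def by simp
    ultimately have "y \<in> comp x" by simp
    then show "(adj_in W E)\<^sup>*\<^sup>* x y" unfolding comp_def by simp
  qed fact
qed

lemma no_cut_vertexI:
  assumes "graph_connected S E"
    and "\<And>z. z \<in> S \<Longrightarrow> S - {z} \<noteq> {} \<Longrightarrow> graph_connected (S - {z}) E"
  shows "no_cut_vertex S E"
  unfolding no_cut_vertex_def cut_vertex_def
proof (intro ballI notI)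
  fix z assume "z \<in> S" and more: "z \<in> S \<and> ncomp S E < ncomp (S - {z}) E"
  have "ncomp (S - {z}) E \<le> 1"
  proof (cases "S - {z} = {}")
    case True
    then show ?thesis unfolding True ncomp_def by simp
  next
    case False
    with assms(2) \<open>z \<in> S\<close> show ?thesis by (simp add: ncomp_connected)
  qed
  with more ncomp_connected[OF assms(1)] show False by simp
qed

lemma not_cut_vertexI:
  "graph_connected W E \<Longrightarrow> graph_connected (W - {u}) E \<Longrightarrow> \<not> cut_vertex W E u"
  unfolding cut_vertex_def by (simp add: ncomp_connected)

lemma connected_Diff_not_cut_vertex:
  assumes "finite W" "graph_connected W E" "\<not> cut_vertex W E a" "W - {a} \<noteq> {}"
  shows "graph_connected (W - {a}) E"
proof (cases "a \<in> W")
  case True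
  with assms(2,3) have "ncomp (W - {a}) E \<le> 1"
    unfolding cut_vertex_def by (simp add: ncomp_connected)
  with assms show ?thesis by (simp add: connected_if_ncomp_le_1)
next
  case False
  with assms(2) show ?thesis by simp
qed

lemma clique_connected:
  assumes "is_clique K E" "K \<noteq> {}"
  shows "graph_connected K E"
  unfolding graph_connected_def
proof (intro conjI ballI)
  fix x y assume "x \<in> K" "y \<in> K"
  with assms(1) have "x = y \<or> adj_in K E x y"
    unfolding is_clique_def adj_in_def by blast
  then show "(adj_in K E)\<^sup>*\<^sup>* x y" by auto
qed fact

lemma clique_subset: "is_clique Q E \<Longrightarrow> X \<subseteq> Q \<Longrightarrow> is_clique X E"
  unfolding is_clique_def by blast

locale simple_graph =
  fixes V :: "'a set" and E :: "'a \<Rightarrow> 'a \<Rightarrow> bool"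
  assumes sgraph: "sgraph V E"
begin

lemma edge_sym: "E x y \<Longrightarrow> E y x"
  using sgraph unfolding sgraph_def by blast

lemma edge_neq: "E x y \<Longrightarrow> x \<noteq> y"
  using sgraph unfolding sgraph_def by blast

lemma edge_in_V: "E x y \<Longrightarrow> x \<in> V" "E x y \<Longrightarrow> y \<in> V"
  using sgraph unfolding sgraph_def by blast+

lemma finite_V: "finite V"
  using sgraph unfolding sgraph_def by blast

lemma mem_nbhd_iff: "z \<in> nbhd V E u \<longleftrightarrow> E u z"
  unfolding nbhd_def adj_in_def using edge_in_V by blast

lemma nbhd_eq_singleton_iff: "nbhd V E z = {u} \<longleftrightarrow> E u z \<and> (\<forall>z'. E z z' \<longrightarrow> z' = u)"
  using mem_nbhd_iff edge_sym by blast

lemma mem_pendant_nbrs_iff: "z \<in> pendant_nbrs V E u \<longleftrightarrow> E u z \<and> (\<forall>z'. E z z' \<longrightarrow> z' = u)"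
proof
  assume "z \<in> pendant_nbrs V E u"
  then have "E u z" "card (nbhd V E z) = 1"
    unfolding pendant_nbrs_def degree_def mem_nbhd_iff by auto
  moreover obtain c where "nbhd V E z = {c}"
    using card_1_singletonE[OF \<open>card (nbhd V E z) = 1\<close>] .
  moreover have "u \<in> nbhd V E z"
    using \<open>E u z\<close> mem_nbhd_iff edge_sym by blast
  ultimately have "nbhd V E z = {u}" by simp
  then show "E u z \<and> (\<forall>z'. E z z' \<longrightarrow> z' = u)"
    by (rule nbhd_eq_singleton_iff[THEN iffD1])
next
  assume "E u z \<and> (\<forall>z'. E z z' \<longrightarrow> z' = u)"
  then have "nbhd V E z = {u}" "E u z"
    using nbhd_eq_singleton_iff by blast+
  then show "z \<in> pendant_nbrs V E u"
    unfolding pendant_nbrs_def degree_def by (simp add: mem_nbhd_iff)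
qed

lemma reachable_sym: "(adj_in W E)\<^sup>*\<^sup>* x y \<Longrightarrow> (adj_in W E)\<^sup>*\<^sup>* y x"
proof -
  have "(adj_in W E)\<inverse>\<inverse> = adj_in W E"
    unfolding adj_in_def by (auto intro: edge_sym)
  then show "(adj_in W E)\<^sup>*\<^sup>* x y \<Longrightarrow> (adj_in W E)\<^sup>*\<^sup>* y x"
    by (metis rtranclp_converseI)
qed

lemma connectedI_root:
  assumes "r \<in> W" and "\<And>w. w \<in> W \<Longrightarrow> (adj_in W E)\<^sup>*\<^sup>* r w"
  shows "graph_connected W E"
  unfolding graph_connected_def
proof (intro conjI ballI)
  fix x y assume "x \<in> W" "y \<in> W"
  then show "(adj_in W E)\<^sup>*\<^sup>* x y"
    using assms(2) reachable_sym by (meson rtranclp_trans)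
qed (use assms(1) in blast)

definition separated_in :: "'a set \<Rightarrow> 'a set \<Rightarrow> bool" where
  "separated_in W D \<longleftrightarrow> D \<subseteq> W \<and> (\<forall>p\<in>D. \<forall>q\<in>W - D. \<not> E p q)"

lemma connectedI_separated:
  assumes "r \<in> W" and "\<And>D. separated_in W D \<Longrightarrow> r \<notin> D \<Longrightarrow> D = {}"
  shows "graph_connected W E"
proof (rule connectedI_root[OF \<open>r \<in> W\<close>])
  define D where "D = {w \<in> W. \<not> (adj_in W E)\<^sup>*\<^sup>* r w}"
  have "separated_in W D"
    unfolding separated_in_def
  proof (intro conjI ballI notI)
    fix p q assume "p \<in> D" "q \<in> W - D" "E p q"
    then have "(adj_in W E)\<^sup>*\<^sup>* r q" "adj_in W E q p"
      unfolding D_def adj_in_def by (auto intro: edge_sym)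
    then have "(adj_in W E)\<^sup>*\<^sup>* r p" by (rule rtranclp.rtrancl_into_rtrancl)
    with \<open>p \<in> D\<close> show False unfolding D_def by blast
  qed (auto simp: D_def)
  then have "D = {}"
    using assms(2) unfolding D_def by blast
  then show "(adj_in W E)\<^sup>*\<^sup>* r w" if "w \<in> W" for w
    using that unfolding D_def by blast
qed

lemma separated_in_connected:
  assumes "graph_connected W E" "separated_in W D" "D \<noteq> W"
  shows "D = {}"
proof (rule ccontr)
  assume "D \<noteq> {}"
  then obtain s t where "s \<in> D" "t \<in> W - D"
    using assms(2,3) unfolding separated_in_def by blast
  then have "(adj_in W E)\<^sup>*\<^sup>* s t"
    using assms(1,2) unfolding graph_connected_def separated_in_def by blast
  from this \<open>s \<in> D\<close> \<open>t \<in> W - D\<close> show False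
  proof (induction rule: rtranclp_induct)
    case (step y z)
    then show ?case
      using assms(2) unfolding separated_in_def adj_in_def by blast
  qed simp
qed

lemma connected_Un:
  assumes "graph_connected A E" "graph_connected B E" "a \<in> A" "b \<in> B" "E a b"
  shows "graph_connected (A \<union> B) E"
proof (rule connectedI_root)
  show "a \<in> A \<union> B" using assms(3) by blast
  fix w assume "w \<in> A \<union> B"
  then show "(adj_in (A \<union> B) E)\<^sup>*\<^sup>* a w"
  proof
    assume "w \<in> A"
    with assms(1,3) have "(adj_in A E)\<^sup>*\<^sup>* a w"
      unfolding graph_connected_def by blast
    then show ?thesis by (rule reachable_mono[rotated]) blast
  next
    assume "w \<in> B"
    with assms(2,4) have "(adj_in B E)\<^sup>*\<^sup>* b w"
      unfolding graph_connected_def by blast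
    then have "(adj_in (A \<union> B) E)\<^sup>*\<^sup>* b w" by (rule reachable_mono[rotated]) blast
    moreover have "adj_in (A \<union> B) E a b"
      using assms(3-5) unfolding adj_in_def by blast
    ultimately show ?thesis by (rule converse_rtranclp_into_rtranclp[rotated])
  qed
qed

lemma connected_reachable_set:
  assumes "x \<in> W"
  shows "graph_connected {w \<in> W. (adj_in W E)\<^sup>*\<^sup>* x w} E"
  by (rule connectedI_root[of x]) (use assms reachable_within_reachable_set in auto)

lemma connected_Diff_separated:
  assumes "graph_connected X E" "D \<subseteq> X" "z \<in> X - D"
    and only_z: "\<And>p q. p \<in> D \<Longrightarrow> q \<in> X - D \<Longrightarrow> E p q \<Longrightarrow> q = z"
  shows "graph_connected (X - D) E"
proof (rule connectedI_separated[OF assms(3)])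
  fix D' assume D': "separated_in (X - D) D'" "z \<notin> D'"
  have "separated_in X D'"
    unfolding separated_in_def
  proof (intro conjI ballI notI)
    fix p q assume pq: "p \<in> D'" "q \<in> X - D'" "E p q"
    show False
    proof (cases "q \<in> D")
      case True
      with pq D' only_z[OF True _ edge_sym[OF pq(3)]] show False
        unfolding separated_in_def by blast
    next
      case False
      with pq D' show False unfolding separated_in_def by blast
    qed
  qed (use D' in \<open>auto simp: separated_in_def\<close>)
  moreover have "D' \<noteq> X" using D' assms(3) by blast
  ultimately show "D' = {}" by (rule separated_in_connected[OF assms(1)])
qed

lemma block_clique_unique_nbr:
  assumes blk: "is_block V E Q" "is_clique Q E"
    and "y \<notin> Q" "a \<in> Q" "b \<in> Q" "E y a" "E y b"
  shows "a = b"
proof (rule ccontr)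
  assume "a \<noteq> b"
  have y: "graph_connected {y} E" "y \<in> V"
    using edge_in_V(1)[OF assms(6)] unfolding graph_connected_def by auto
  have conn: "graph_connected (Q \<union> {y}) E"
    using connected_Un[OF clique_connected[OF blk(2)] y(1)] assms(4,6) edge_sym by blast
  have "no_cut_vertex (Q \<union> {y}) E"
  proof (rule no_cut_vertexI[OF conn])
    fix z assume "z \<in> Q \<union> {y}"
    show "graph_connected (Q \<union> {y} - {z}) E"
    proof (cases "z = y")
      case True
      then have "Q \<union> {y} - {z} = Q" using assms(3) by blast
      with clique_connected[OF blk(2)] assms(4) show ?thesis by auto
    next
      case False
      then obtain d where d: "d \<in> Q - {z}" "E d y"
        using \<open>a \<noteq> b\<close> assms(4-7) edge_sym by blast
      then have "graph_connected ((Q - {z}) \<union> {y}) E"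
        by (intro connected_Un[OF clique_connected y(1)])
          (auto intro: clique_subset[OF blk(2)])
      moreover have "Q \<union> {y} - {z} = (Q - {z}) \<union> {y}" using False by blast
      ultimately show ?thesis by simp
    qed
  qed
  with blk(1) conn y(2) have "Q \<union> {y} = Q"
    unfolding is_block_def by blast
  with assms(3) show False by blast
qed

lemma ex_block_containing_edge:
  assumes "E u x"
  shows "\<exists>B. is_block V E B \<and> u \<in> B \<and> x \<in> B"
proof -
  define P where "P S \<longleftrightarrow> {u, x} \<subseteq> S \<and> S \<subseteq> V \<and> graph_connected S E \<and> no_cut_vertex S E" for S
  have clique: "is_clique {u, x} E"
    unfolding is_clique_def using assms edge_sym by auto
  have "no_cut_vertex {u, x} E"
  proof (rule no_cut_vertexI)
    fix z assume "z \<in> {u, x}" "{u, x} - {z} \<noteq> {}"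
    then show "graph_connected ({u, x} - {z}) E"
      by (auto intro!: clique_connected clique_subset[OF clique])
  qed (simp add: clique_connected[OF clique])
  then have "P {u, x}"
    unfolding P_def using clique_connected[OF clique] edge_in_V[OF assms] by auto
  then obtain B where B: "P B" and least: "\<And>S. P S \<Longrightarrow> card V - card B \<le> card V - card S"
    using ex_has_least_nat[of P "{u, x}" "\<lambda>S. card V - card S"] by blast
  have "is_block V E B"
    unfolding is_block_def
  proof (intro conjI allI impI)
    show "B \<subseteq> V" "graph_connected B E" "no_cut_vertex B E"
      using B unfolding P_def by auto
    fix B' assume B': "B \<subseteq> B' \<and> B' \<subseteq> V \<and> graph_connected B' E \<and> no_cut_vertex B' E"
    then have "P B'" using B unfolding P_def by auto
    then have "card V - card B \<le> card V - card B'" by (rule least)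
    moreover have "card B' \<le> card V" using B' card_mono[OF finite_V] by blast
    moreover have "finite B'" using B' finite_V finite_subset by blast
    moreover have "card B \<le> card B'" using B' card_mono[OF \<open>finite B'\<close>] by blast
    ultimately have "card B = card B'" by linarith
    with B' \<open>finite B'\<close> show "B' = B" using card_subset_eq by blast
  qed
  with B show ?thesis unfolding P_def by auto
qed

lemma no_cut_vertex_clique_Un_ear:
  assumes cl: "is_clique Q E" and "a \<in> Q" "c \<in> Q" "c \<noteq> a"
    and X: "X \<inter> Q = {}" "graph_connected X E" "x \<in> X" "E a x" "y \<in> X" "E y c"
    and minimal: "\<And>X'. X' \<subseteq> X \<Longrightarrow> graph_connected X' E \<Longrightarrow> x \<in> X' \<Longrightarrow> y \<in> X' \<Longrightarrow> X' = X"
  shows "no_cut_vertex (Q \<union> X) E"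
proof (rule no_cut_vertexI)
  show "graph_connected (Q \<union> X) E"
    using connected_Un[OF clique_connected[OF cl] X(2)] assms(2) X(3,4) by blast
next
  fix z assume "z \<in> Q \<union> X"
  then consider "z \<in> Q" | "z \<in> X" "z \<notin> Q" using X(1) by blast
  then show "graph_connected (Q \<union> X - {z}) E"
  proof cases
    case 1
    obtain q w where qw: "q \<in> Q - {z}" "w \<in> X" "E q w"
    proof (cases "z = a")
      case True
      then show thesis using that[of c y] assms(3,4) X(5,6) edge_sym by blast
    next
      case False
      then show thesis using that[of a x] assms(2) X(3,4) by blast
    qed
    have "graph_connected ((Q - {z}) \<union> X) E"
    proof (rule connected_Un[OF clique_connected X(2) qw])
      show "is_clique (Q - {z}) E" by (rule clique_subset[OF cl]) blast
    qed (use qw in blast)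
    moreover have "Q \<union> X - {z} = (Q - {z}) \<union> X" using X(1) 1 by blast
    ultimately show ?thesis by simp
  next
    case 2
    show ?thesis
    proof (rule connectedI_separated[of a])
      show a: "a \<in> Q \<union> X - {z}" using assms(2) 2 by blast
      fix D assume D: "separated_in (Q \<union> X - {z}) D" "a \<notin> D"
      then have D_sub: "D \<subseteq> Q \<union> X - {z}"
        and sep: "\<And>p q. p \<in> D \<Longrightarrow> q \<in> Q \<union> X - {z} - D \<Longrightarrow> \<not> E p q"
        unfolding separated_in_def by blast+
      have "D \<inter> Q = {}"
      proof (rule ccontr)
        assume "D \<inter> Q \<noteq> {}"
        then obtain q where "q \<in> D" "q \<in> Q" by blast
        moreover have "q \<noteq> a" using D(2) \<open>q \<in> D\<close> by blast
        ultimately have "E q a" using cl assms(2) unfolding is_clique_def by blast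
        with sep[OF \<open>q \<in> D\<close>] a D(2) show False by blast
      qed
      then have "c \<in> Q \<union> X - {z} - D" using assms(3) 2 by blast
      then have "y \<notin> D" using sep X(6) by blast
      have "x \<notin> D" using sep a D(2) edge_sym[OF X(4)] by blast
      have D_X: "D \<subseteq> X" using D_sub \<open>D \<inter> Q = {}\<close> by blast
      have "graph_connected (X - D) E"
      proof (rule connected_Diff_separated[OF X(2) D_X])
        show "z \<in> X - D" using 2 D_sub by blast
        show "q = z" if "p \<in> D" "q \<in> X - D" "E p q" for p q
          using sep[OF that(1)] that(2,3) by blast
      qed
      then have "X - D = X"
        using minimal \<open>x \<notin> D\<close> \<open>y \<notin> D\<close> X(3,5) by blast
      with D_X show "D = {}" by blast
    qed
  qed
qed

end

locale connected_graph = simple_graph +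
  assumes connected: "graph_connected V E"
begin

lemma cut_vertex_has_nbr_outside:
  assumes cl: "is_clique Q E" and "u \<in> Q" "b \<in> Q" "b \<noteq> u" "cut_vertex V E u"
  shows "\<exists>x\<in>V - Q. E u x"
proof (rule ccontr)
  assume none: "\<not> (\<exists>x\<in>V - Q. E u x)"
  have "b \<in> V" using assms(5) cl assms(2-4) edge_in_V unfolding is_clique_def by blast
  have "graph_connected (V - {u}) E"
  proof (rule connectedI_separated[of b])
    show "b \<in> V - {u}" using \<open>b \<in> V\<close> assms(4) by blast
    fix D assume D: "separated_in (V - {u}) D" "b \<notin> D"
    have "separated_in V D"
      unfolding separated_in_def
    proof (intro conjI ballI notI)
      fix p q assume pq: "p \<in> D" "q \<in> V - D" "E p q"
      show False
      proof (cases "q = u")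
        case True
        then have "p \<in> Q" "p \<noteq> b"
          using pq none edge_sym edge_in_V D(2) by blast+
        then have "E p b" using cl assms(3) unfolding is_clique_def by blast
        with pq(1) D \<open>b \<in> V - {u}\<close> show False unfolding separated_in_def by blast
      next
        case False
        with pq D show False unfolding separated_in_def by blast
      qed
    qed (use D in \<open>auto simp: separated_in_def\<close>)
    moreover have "D \<noteq> V" using D(2) \<open>b \<in> V\<close> by blast
    ultimately show "D = {}" by (rule separated_in_connected[OF connected])
  qed
  with assms(5) show False using not_cut_vertexI[OF connected] by blast
qed

lemma cut_vertex_if_nbr_outside_block:
  assumes blk: "is_block V E Q" "is_clique Q E"
    and "a \<in> Q" "b \<in> Q" "b \<noteq> a" "x \<in> V - Q" "E a x"
  shows "cut_vertex V E a"
proof (rule ccontr)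
  assume "\<not> cut_vertex V E a"
  moreover have "V - {a} \<noteq> {}" using assms(3,6) by blast
  ultimately have conn_a: "graph_connected (V - {a}) E"
    by (rule connected_Diff_not_cut_vertex[OF finite_V connected])
  have "b \<in> V" using blk(1) assms(4) unfolding is_block_def by blast
  define X0 where "X0 = {w \<in> V - Q. (adj_in (V - Q) E)\<^sup>*\<^sup>* x w}"
  have X0: "X0 \<subseteq> V - Q" "x \<in> X0"
    using assms(6) unfolding X0_def by auto
  have "graph_connected X0 E"
    unfolding X0_def by (rule connected_reachable_set[OF assms(6)])
  obtain y c where yc: "y \<in> X0" "c \<in> Q" "c \<noteq> a" "E y c"
  proof -
    have "X0 \<noteq> {}" "X0 \<noteq> V - {a}" "X0 \<subseteq> V - {a}"
      using X0 assms(3,4,5) \<open>b \<in> V\<close> by auto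
    then have "\<not> separated_in (V - {a}) X0"
      using separated_in_connected[OF conn_a] by blast
    then obtain p q where pq: "p \<in> X0" "q \<in> V - {a} - X0" "E p q"
      using \<open>X0 \<subseteq> V - {a}\<close> unfolding separated_in_def by blast
    have "q \<in> Q"
    proof (rule ccontr)
      assume "q \<notin> Q"
      with pq X0(1) have pq_adj: "adj_in (V - Q) E p q" unfolding adj_in_def by blast
      then have "q \<in> V - Q" unfolding adj_in_def by blast
      moreover have "(adj_in (V - Q) E)\<^sup>*\<^sup>* x q"
        using pq(1) pq_adj unfolding X0_def by (blast intro: rtranclp.rtrancl_into_rtrancl)
      ultimately have "q \<in> X0" unfolding X0_def by blast
      with pq(2) show False by blast
    qed
    with pq that show thesis by blast
  qed
  define P where "P X \<longleftrightarrow> X \<subseteq> X0 \<and> graph_connected X E \<and> x \<in> X \<and> y \<in> X" for X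
  have "P X0" unfolding P_def using X0 \<open>graph_connected X0 E\<close> yc(1) by blast
  then obtain X where X: "P X" and least: "\<And>X'. P X' \<Longrightarrow> card X \<le> card X'"
    using ex_has_least_nat[of P X0 card] by blast
  have X_sub: "X \<subseteq> V - Q" and X_conn: "graph_connected X E" and "x \<in> X" "y \<in> X"
    using X X0(1) unfolding P_def by blast+
  have "finite X" using X_sub finite_V finite_subset by blast
  have "no_cut_vertex (Q \<union> X) E"
  proof (rule no_cut_vertex_clique_Un_ear[OF blk(2) assms(3) yc(2,3) _ X_conn \<open>x \<in> X\<close> assms(7)
        \<open>y \<in> X\<close> yc(4)])
    show "X \<inter> Q = {}" using X_sub by blast
    fix X' assume X': "X' \<subseteq> X" "graph_connected X' E" "x \<in> X'" "y \<in> X'"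
    then have "P X'" using X unfolding P_def by blast
    then have "card X \<le> card X'" by (rule least)
    with X'(1) \<open>finite X\<close> show "X' = X" by (meson card_seteq)
  qed
  moreover have "graph_connected (Q \<union> X) E"
    using connected_Un[OF clique_connected[OF blk(2)] X_conn _ \<open>x \<in> X\<close> assms(7)] assms(3) by blast
  moreover have "Q \<union> X \<subseteq> V" using blk(1) X_sub unfolding is_block_def by blast
  ultimately have "Q \<union> X = Q" using blk(1) unfolding is_block_def by blast
  with X_sub \<open>x \<in> X\<close> show False by blast
qed

end

section \<open>Co-interval subgraphs near a clique with pendant edges\<close>

definition clique_star_edge :: "'a set \<Rightarrow> 'a \<Rightarrow> 'a \<Rightarrow> 'a \<Rightarrow> 'a \<Rightarrow> bool" where
  "clique_star_edge Q a b x y \<longleftrightarrow>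
     (x \<in> Q \<and> y \<in> Q) \<or> ((x = a \<or> x = b) \<and> y \<notin> Q) \<or> ((y = a \<or> y = b) \<and> x \<notin> Q)"

definition at_most_one_nbr_in :: "('a \<Rightarrow> 'a \<Rightarrow> bool) \<Rightarrow> 'a set \<Rightarrow> bool" where
  "at_most_one_nbr_in E Q \<longleftrightarrow> (\<forall>y a b. y \<notin> Q \<longrightarrow> a \<in> Q \<longrightarrow> b \<in> Q \<longrightarrow> E y a \<longrightarrow> E y b \<longrightarrow> a = b)"

lemma at_most_one_nbr_inD:
  "at_most_one_nbr_in E Q \<Longrightarrow> y \<notin> Q \<Longrightarrow> a \<in> Q \<Longrightarrow> b \<in> Q \<Longrightarrow> E y a \<Longrightarrow> E y b \<Longrightarrow> a = b"
  unfolding at_most_one_nbr_in_def by blast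

context simple_graph
begin

text \<open>The vertices of Q become distinct points with a leftmost and b rightmost; a vertex outside Q
  gets an interval missing exactly the point of its neighbour among a, b, if any.\<close>
lemma ex_cointerval_clique_star_graph:
  assumes "V' \<subseteq> V" "is_clique Q E" "at_most_one_nbr_in E Q" "a \<in> Q" "b \<in> Q"
  shows "\<exists>F. cointerval V' F \<and> (\<forall>x\<in>V'. \<forall>y\<in>V'. F x y \<longrightarrow> E x y) \<and>
    (\<forall>x\<in>V'. \<forall>y\<in>V'. E x y \<longrightarrow> clique_star_edge Q a b x y \<longrightarrow> F x y)"
proof -
  have "finite (Q \<inter> V')" using assms(1) finite_V finite_subset by blast
  then obtain pos :: "'a \<Rightarrow> real" where pos: "pos a = 0" "b \<noteq> a \<Longrightarrow> pos b = 3"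
    and pos_inj: "\<And>x y. x \<in> Q \<inter> V' \<Longrightarrow> y \<in> Q \<inter> V' \<Longrightarrow> x \<noteq> y \<Longrightarrow> pos x \<noteq> pos y"
    and pos_cases: "\<And>z. z \<in> Q \<inter> V' \<Longrightarrow> pos z = 0 \<and> z = a \<or> pos z = 3 \<and> z = b \<or> 1 \<le> pos z \<and> pos z \<le> 2"
    by (rule ex_points_with_ends[where a = a and b = b]) blast
  define l where "l z = (if z \<in> Q then pos z else if E a z then 1/2 else - 1 :: real)" for z
  define r where
    "r z = (if z \<in> Q then pos z else if E a z then 4 else if E b z then 5/2 else 4 :: real)" for z
  define F where "F x y \<longleftrightarrow> r x < l y \<or> r y < l x" for x y
  have cross: "F x y \<longleftrightarrow> (x = a \<and> E a y) \<or> (x = b \<and> E b y)" if "x \<in> Q \<inter> V'" "y \<notin> Q" for x y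
  proof -
    have "E a y \<Longrightarrow> E b y \<Longrightarrow> a = b"
      using at_most_one_nbr_inD[OF assms(3) that(2) assms(4,5)] edge_sym by blast
    moreover have "pos x < 1/2 \<longleftrightarrow> x = a" "5/2 < pos x \<longleftrightarrow> x = b \<and> b \<noteq> a"
      "0 \<le> pos x" "pos x < 4"
      using pos pos_cases[OF that(1)] by auto
    ultimately show ?thesis
      using that unfolding F_def l_def r_def by auto
  qed
  have "cointerval V' F"
    unfolding cointerval_def F_def by (rule exI[of _ l], rule exI[of _ r]) (auto simp: l_def r_def)
  moreover have "E x y" if "x \<in> V'" "y \<in> V'" "F x y" for x y
  proof -
    have "x \<in> Q \<or> y \<in> Q"
      using \<open>F x y\<close> unfolding F_def l_def r_def by (auto split: if_splits)
    moreover have "E x y" if "x \<in> Q" "y \<in> Q"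
      using assms(2) pos_inj \<open>F x y\<close> \<open>x \<in> V'\<close> \<open>y \<in> V'\<close> that
      unfolding is_clique_def F_def l_def r_def by auto
    moreover have "E x y" if "x \<in> Q" "y \<notin> Q"
      using cross[of x y] \<open>F x y\<close> \<open>x \<in> V'\<close> that by auto
    moreover have "E x y" if "y \<in> Q" "x \<notin> Q"
      using cross[of y x] \<open>F x y\<close> \<open>y \<in> V'\<close> that edge_sym unfolding F_def by auto
    ultimately show "E x y" by blast
  qed
  moreover have "F x y" if "x \<in> V'" "y \<in> V'" "E x y" "clique_star_edge Q a b x y" for x y
  proof -
    have "x \<noteq> y" using edge_neq[OF \<open>E x y\<close>] .
    consider "x \<in> Q" "y \<in> Q" | "x \<in> {a, b}" "y \<notin> Q" | "y \<in> {a, b}" "x \<notin> Q"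
      using \<open>clique_star_edge Q a b x y\<close> unfolding clique_star_edge_def by blast
    then show "F x y"
    proof cases
      case 1
      with pos_inj[of x y] that \<open>x \<noteq> y\<close> show ?thesis
        unfolding F_def l_def r_def by auto
    next
      case 2
      with cross[of x y] that assms(4,5) show ?thesis by auto
    next
      case 3
      with cross[of y x] that assms(4,5) edge_sym show ?thesis unfolding F_def by auto
    qed
  qed
  ultimately show ?thesis by blast
qed

lemma cointerval_edge_near_pendant_edge:
  assumes F: "cointerval W F" "\<forall>x\<in>W. \<forall>y\<in>W. F x y \<longrightarrow> E x y"
    and "c \<in> W" "p \<in> W" "F c p" "p \<in> pendant_nbrs V E c"
    and "x \<in> W" "y \<in> W" "F x y" "x \<notin> {c, p}" "y \<notin> {c, p}"
  shows "E c x \<or> E c y"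
proof -
  have "E c p" "E x y" using F(2) assms(3-5,7-9) by blast+
  then have "F c x \<or> F c y \<or> F p x \<or> F p y"
    using cointerval_2K2_free[OF F(1) assms(3,4,7,8,5,9)] edge_neq assms(10,11) by blast
  moreover have "\<not> E p x" "\<not> E p y"
    using assms(6,10,11) unfolding mem_pendant_nbrs_iff by blast+
  ultimately show ?thesis
    using F(2) assms(3,4,7,8) by blast
qed

lemma cointerval_no_edge_beside_pendant_edges:
  assumes F: "cointerval W F" "\<forall>x\<in>W. \<forall>y\<in>W. F x y \<longrightarrow> E x y"
    and pendants: "p \<in> pendant_nbrs V E u" "q \<in> pendant_nbrs V E w" "u \<noteq> w" "p \<noteq> w" "q \<noteq> u"
    and W: "u \<in> W" "p \<in> W" "w \<in> W" "q \<in> W" "x \<in> W" "y \<in> W"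
    and edges: "F u p" "F w q" "F x y"
    and xy: "x \<notin> {u, w, p, q}" "y \<notin> {u, w, p, q}" "\<not> E u y" "\<not> E w y"
  shows False
proof -
  have p: "E u p" "\<And>z. E p z \<Longrightarrow> z = u" and q: "E w q" "\<And>z. E q z \<Longrightarrow> z = w"
    using pendants(1,2) unfolding mem_pendant_nbrs_iff by blast+
  have "E x y" using F(2) W(5,6) edges(3) by blast
  have no_F: "\<not> F a b" if "a \<in> W" "b \<in> W" "\<not> E a b" for a b
    using F(2) that by blast
  have "\<not> E p w" "\<not> E p q" "\<not> E p x" "\<not> E p y" "\<not> E q u" "\<not> E q x" "\<not> E q y"
    using p(2) q(2) pendants(3,5) xy(1,2) by blast+
  with xy(3,4) have "\<not> F p w" "\<not> F p q" "\<not> F p x" "\<not> F p y" "\<not> F q u" "\<not> F q x" "\<not> F q y"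
    "\<not> F u y" "\<not> F w y"
    using no_F W by blast+
  moreover have "u \<noteq> p" "w \<noteq> q" "x \<noteq> y" using p(1) q(1) \<open>E x y\<close> edge_neq by blast+
  moreover have "p \<noteq> q" using p(2)[of w] edge_sym[OF q(1)] pendants(3) by blast
  moreover have "p \<noteq> x" "p \<noteq> y" "q \<noteq> x" "q \<noteq> y" "u \<noteq> y" "w \<noteq> y"
    using xy(1,2) by blast+
  ultimately show False
    using cointerval_three_edge_obstruction[OF F(1) W edges] pendants(4,5) by blast
qed

lemma pendant_if_outside_nbr:
  assumes "nbhd V E c - Q \<subseteq> pendant_nbrs V E c" "E c y" "y \<notin> Q" "E y x"
  shows "x = c"
proof -
  have "y \<in> nbhd V E c - Q" using assms(2,3) mem_nbhd_iff by blast
  with assms(1) have "y \<in> pendant_nbrs V E c" by blast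
  with assms(4) show ?thesis by (simp add: mem_pendant_nbrs_iff)
qed

context
  fixes W F Q c p
  assumes F: "cointerval W F" "\<forall>x\<in>W. \<forall>y\<in>W. F x y \<longrightarrow> E x y"
    and c: "c \<in> Q" "nbhd V E c - Q \<subseteq> pendant_nbrs V E c"
    and p: "c \<in> W" "p \<in> W" "F c p" "p \<in> pendant_nbrs V E c"
begin

lemma cointerval_edge_avoiding_pendant_edge_meets:
  assumes "x \<in> W" "y \<in> W" "F x y" "x \<notin> {c, p}" "y \<notin> {c, p}"
  shows "x \<in> Q \<or> y \<in> Q"
proof -
  have "E x y" using F(2) assms(1-3) by blast
  with cointerval_edge_near_pendant_edge[OF F p assms] pendant_if_outside_nbr[OF c(2)]
    edge_sym assms(4,5) show ?thesis by blast
qed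

lemma cointerval_crossing_edges_share_end:
  assumes "at_most_one_nbr_in E Q"
    and x: "x \<in> W \<inter> Q - {c, p}" "y \<in> W - Q - {c, p}" "F x y"
    and x': "x' \<in> W \<inter> Q - {c, p}" "y' \<in> W - Q - {c, p}" "F x' y'"
  shows "x = x'"
proof (rule ccontr)
  assume "x \<noteq> x'"
  have E: "E x y" "E x' y'" using F(2) x x' by blast+
  have no_F: "\<not> F s t" if "s \<in> W" "t \<in> W" "\<not> E s t" for s t
    using F(2) that by blast
  have W: "x \<in> W" "y \<in> W" "x' \<in> W" "y' \<in> W" using x x' by blast+
  have ne: "c \<noteq> p" "x \<noteq> y" "x' \<noteq> y'"
    using edge_neq F(2) p(1-3) E by blast+
  have dist: "p \<noteq> x" "p \<noteq> y" "p \<noteq> x'" "p \<noteq> y'" "c \<noteq> y" "c \<noteq> y'" "x \<noteq> y'" "x' \<noteq> y"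
    using x x' by blast+
  have "\<not> E p z" if "z \<noteq> c" for z
    using p(4) that unfolding mem_pendant_nbrs_iff by blast
  then have nE: "\<not> E p x" "\<not> E p y" "\<not> E p x'" "\<not> E p y'"
    using x x' by blast+
  have "\<not> E c y" "\<not> E c y'"
    using pendant_if_outside_nbr[OF c(2)] E edge_sym x x' by blast+
  moreover have "\<not> E x y'" "\<not> E x' y"
    using at_most_one_nbr_inD[OF assms(1)] \<open>x \<noteq> x'\<close> x x' E edge_sym by blast+
  ultimately have "\<not> F p x" "\<not> F p y" "\<not> F p x'" "\<not> F p y'" "\<not> F c y" "\<not> F c y'"
    "\<not> F x y'" "\<not> F x' y"
    using no_F[OF p(2) W(1) nE(1)] no_F[OF p(2) W(2) nE(2)] no_F[OF p(2) W(3) nE(3)]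
      no_F[OF p(2) W(4) nE(4)] no_F[OF p(1) W(2)] no_F[OF p(1) W(4)] no_F[OF W(1) W(4)]
      no_F[OF W(3) W(2)]
    by blast+
  from cointerval_crossing_edges_obstruction[OF F(1) p(1,2) W p(3) x(3) x'(3) ne dist this]
  show False .
qed

lemma cointerval_edges_avoiding_pendant_edge:
  assumes "at_most_one_nbr_in E Q"
  shows "\<exists>a\<in>Q. \<forall>x\<in>W. \<forall>y\<in>W. F x y \<longrightarrow> x \<notin> {c, p} \<longrightarrow> y \<notin> {c, p} \<longrightarrow> clique_star_edge Q a a x y"
proof -
  define ends where "ends = {x \<in> W \<inter> Q - {c, p}. \<exists>y\<in>W - Q - {c, p}. F x y}"
  obtain a where "a \<in> Q" "ends \<subseteq> {a}"
  proof (cases "ends = {}")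
    case True
    with c(1) that show thesis by blast
  next
    case False
    then obtain x where "x \<in> ends" by blast
    then have "ends \<subseteq> {x}" "x \<in> Q"
      using cointerval_crossing_edges_share_end[OF assms] unfolding ends_def by blast+
    with that show thesis by blast
  qed
  have "clique_star_edge Q a a x y"
    if xy: "x \<in> W" "y \<in> W" "F x y" "x \<notin> {c, p}" "y \<notin> {c, p}" for x y
  proof -
    consider "x \<in> Q" "y \<in> Q" | "x \<in> Q" "y \<notin> Q" | "x \<notin> Q" "y \<in> Q"
      using cointerval_edge_avoiding_pendant_edge_meets[OF xy] by blast
    then show ?thesis
    proof cases
      case 1
      then show ?thesis unfolding clique_star_edge_def by blast
    next
      case 2
      with xy have "x \<in> ends" unfolding ends_def by blast
      with \<open>ends \<subseteq> {a}\<close> have "x = a" by blast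
      with 2 show ?thesis unfolding clique_star_edge_def by simp
    next
      case 3
      have "x \<noteq> y" using edge_neq F(2) xy(1-3) by blast
      with cointerval_sym[OF F(1) xy(1,2)] xy(3) have "F y x" by blast
      with xy 3 have "y \<in> ends" unfolding ends_def by blast
      with \<open>ends \<subseteq> {a}\<close> have "y = a" by blast
      with 3 show ?thesis unfolding clique_star_edge_def by simp
    qed
  qed
  with \<open>a \<in> Q\<close> show ?thesis by blast
qed

end

end

section \<open>Shrinking an optimal cover\<close>

locale covered_graph = simple_graph +
  fixes k :: nat and Vs :: "nat \<Rightarrow> 'a set" and Es :: "nat \<Rightarrow> 'a \<Rightarrow> 'a \<Rightarrow> bool"
  assumes cover: "is_cointerval_cover V E k Vs Es"
begin

lemma cover_cointerval: "i < k \<Longrightarrow> cointerval (Vs i) (Es i)"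
  using cover unfolding is_cointerval_cover_def by blast

lemma cover_subgraph: "i < k \<Longrightarrow> x \<in> Vs i \<Longrightarrow> y \<in> Vs i \<Longrightarrow> Es i x y \<Longrightarrow> E x y"
  using cover unfolding is_cointerval_cover_def by blast

lemma ex_cover_graph_with_edge:
  assumes "E a b"
  obtains i where "i < k" "a \<in> Vs i" "b \<in> Vs i" "Es i a b"
proof -
  have "{a, b} \<in> edges V E"
    using assms edge_in_V by (blast intro: doubleton_in_edges)
  then obtain i where i: "i < k" "{a, b} \<in> edges (Vs i) (Es i)"
    using cover unfolding is_cointerval_cover_def by blast
  then have "a \<in> Vs i" "b \<in> Vs i" "Es i a b \<or> Es i b a"
    using doubleton_in_edges_iff[OF edge_neq[OF assms]] by blast+
  moreover have "Es i b a \<Longrightarrow> Es i a b"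
    using cointerval_sym[OF cover_cointerval[OF i(1)]] \<open>a \<in> Vs i\<close> \<open>b \<in> Vs i\<close> edge_neq[OF assms]
    by blast
  ultimately show thesis using that i(1) by blast
qed

lemma cobox_le_pred_if_unused:
  assumes "V' \<subseteq> V" "i < k"
    and unused: "\<And>x y. x \<in> V' \<Longrightarrow> y \<in> V' \<Longrightarrow> x \<in> Vs i \<Longrightarrow> y \<in> Vs i \<Longrightarrow> Es i x y \<Longrightarrow> False"
  shows "cobox V' E \<le> k - 1"
proof (rule cobox_le_pred_if_redundant[OF cointerval_cover_restrict[OF cover assms(1)] assms(2)])
  fix e assume "e \<in> edges (Vs i \<inter> V') (Es i)"
  with unused show "\<exists>j<k. j \<noteq> i \<and> e \<in> edges (Vs j \<inter> V') (Es j)"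
    unfolding mem_edges_iff by blast
qed

lemma cobox_le_pred_if_merged:
  assumes "V' \<subseteq> V" "i < k" "m < k" "m \<noteq> i"
    and F: "\<forall>x\<in>V'. \<forall>y\<in>V'. F x y \<longrightarrow> E x y" "cointerval V' F"
    and merged: "\<And>j x y. j \<in> {i, m} \<Longrightarrow> x \<in> V' \<Longrightarrow> y \<in> V' \<Longrightarrow> x \<in> Vs j \<Longrightarrow> y \<in> Vs j \<Longrightarrow>
      Es j x y \<Longrightarrow> F x y"
  shows "cobox V' E \<le> k - 1"
proof -
  let ?Vs = "(\<lambda>j. Vs j \<inter> V')(m := V')" and ?Es = "Es(m := F)"
  have merged_edges: "edges (Vs j \<inter> V') (Es j) \<subseteq> edges V' F" if "j \<in> {i, m}" for j
    using merged[OF that] unfolding edges_def adj_in_def by blast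
  have cover': "is_cointerval_cover V' E k ?Vs ?Es"
    by (rule cointerval_cover_update[OF cointerval_cover_restrict[OF cover assms(1)] assms(3) _ F])
      (use merged_edges in auto)
  show ?thesis
  proof (rule cobox_le_pred_if_redundant[OF cover' assms(2)])
    fix e assume "e \<in> edges (?Vs i) (?Es i)"
    then have "e \<in> edges (?Vs m) (?Es m)"
      using merged_edges[of i] assms(4) by auto
    with assms(3,4) show "\<exists>j<k. j \<noteq> i \<and> e \<in> edges (?Vs j) (?Es j)" by blast
  qed
qed

lemma cobox_le_pred_if_isolated_edge:
  assumes "V' \<subseteq> V" "E a b" "a \<notin> V'" "b \<notin> V'"
    and isolated: "\<And>z. z \<in> V' \<Longrightarrow> \<not> E a z \<and> \<not> E b z"
  shows "cobox V' E \<le> k - 1"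
proof -
  obtain i where i: "i < k" "a \<in> Vs i" "b \<in> Vs i" "Es i a b"
    using ex_cover_graph_with_edge[OF assms(2)] .
  show ?thesis
  proof (rule cobox_le_pred_if_unused[OF assms(1) i(1)])
    fix x y assume xy: "x \<in> V'" "y \<in> V'" "x \<in> Vs i" "y \<in> Vs i" "Es i x y"
    then have "x \<noteq> y" using cover_subgraph[OF i(1)] edge_neq by blast
    moreover have "a \<noteq> x" "a \<noteq> y" "b \<noteq> x" "b \<noteq> y" using xy(1,2) assms(3,4) by blast+
    ultimately have "Es i a x \<or> Es i a y \<or> Es i b x \<or> Es i b y"
      using cointerval_2K2_free[OF cover_cointerval[OF i(1)] i(2,3) xy(3,4) i(4) xy(5)]
        edge_neq[OF assms(2)] by blast
    then show False
      using cover_subgraph[OF i(1)] i(2,3) xy(3,4) isolated[OF xy(1)] isolated[OF xy(2)] by blast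
  qed
qed

lemma cobox_le_pred_if_pendant_star:
  assumes "V' \<subseteq> V" "v \<in> V'" "u \<notin> V'" "w \<notin> V'" "p \<notin> V'" "q \<notin> V'"
    and "E u w" "E u v" "E w v" "p \<in> pendant_nbrs V E u" "q \<in> pendant_nbrs V E w"
    and only_v: "\<And>z. z \<in> V' \<Longrightarrow> z \<noteq> v \<Longrightarrow> \<not> E u z \<and> \<not> E w z"
  shows "cobox V' E \<le> k - 1"
proof -
  have up: "E u p" "\<And>z. E p z \<Longrightarrow> z = u" and wq: "E w q" "\<And>z. E q z \<Longrightarrow> z = w"
    using assms(10,11) unfolding mem_pendant_nbrs_iff by blast+
  have "u \<noteq> w" using edge_neq[OF assms(7)] .
  have "p \<noteq> w" using up(2)[of v] assms(9) edge_neq[OF assms(8)] by blast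
  have "q \<noteq> u" using wq(2)[of v] assms(8) edge_neq[OF assms(9)] by blast
  have "p \<noteq> q" using up(2)[of w] edge_sym[OF wq(1)] \<open>u \<noteq> w\<close> by blast
  obtain i where i: "i < k" "u \<in> Vs i" "p \<in> Vs i" "Es i u p"
    using ex_cover_graph_with_edge[OF up(1)] .
  obtain j where j: "j < k" "w \<in> Vs j" "q \<in> Vs j" "Es j w q"
    using ex_cover_graph_with_edge[OF wq(1)] .
  have at_v: "x = v \<or> y = v"
    if "g < k" "c \<in> Vs g" "pc \<in> Vs g" "Es g c pc" "pc \<in> pendant_nbrs V E c" "c \<in> {u, w}"
      "pc \<notin> V'" "x \<in> V'" "y \<in> V'" "x \<in> Vs g" "y \<in> Vs g" "Es g x y" for g c pc x y
  proof -
    have "E c x \<or> E c y"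
      using cointerval_edge_near_pendant_edge[OF cover_cointerval[OF that(1)] _ that(2-5,10-12)]
        cover_subgraph[OF that(1)] assms(3,4) that(6-9) by blast
    with only_v that(6,8,9) show ?thesis by blast
  qed
  show ?thesis
  proof (cases "i = j")
    case True
    show ?thesis
    proof (rule cobox_le_pred_if_unused[OF assms(1) i(1)])
      fix x y assume xy: "x \<in> V'" "y \<in> V'" "x \<in> Vs i" "y \<in> Vs i" "Es i x y"
      have beside: False
        if "x' \<in> V'" "y' \<in> V'" "x' \<in> Vs i" "y' \<in> Vs i" "Es i x' y'" "y' \<noteq> v" for x' y'
        using cointerval_no_edge_beside_pendant_edges[OF cover_cointerval[OF i(1)] _ assms(10,11)
            \<open>u \<noteq> w\<close> \<open>p \<noteq> w\<close> \<open>q \<noteq> u\<close> i(2,3) j(2,3)[folded True] that(3,4) i(4)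
            j(4)[folded True] that(5)]
          cover_subgraph[OF i(1)] only_v[OF that(2,6)] assms(3-6) that(1,2) by blast
      have "x \<noteq> y" using cover_subgraph[OF i(1)] xy(3-5) edge_neq by blast
      moreover have "x = v \<or> y = v" using at_v[OF i assms(10)] xy assms(5) by blast
      moreover have "Es i y x"
        using cointerval_sym[OF cover_cointerval[OF i(1)] xy(3,4)] xy(5) \<open>x \<noteq> y\<close> by blast
      ultimately show False using beside xy by blast
    qed
  next
    case False
    show ?thesis
    proof (rule cobox_le_pred_if_merged[OF assms(1) j(1) i(1) False _ cointerval_star])
      show "\<forall>x\<in>V'. \<forall>y\<in>V'. (x = v \<and> E v y \<or> y = v \<and> E v x) \<longrightarrow> E x y"
        using edge_sym by blast
      fix g x y assume "g \<in> {j, i}" "x \<in> V'" "y \<in> V'" "x \<in> Vs g" "y \<in> Vs g" "Es g x y"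
      then have "x = v \<or> y = v" "E x y"
        using at_v[OF i assms(10)] at_v[OF j assms(11)] assms(5,6) cover_subgraph i(1) j(1)
        by blast+
      then show "x = v \<and> E v y \<or> y = v \<and> E v x" using edge_sym by blast
    qed
  qed
qed

lemma cover_graph_centre:
  assumes "i < k" "c \<in> Vs i" "pc \<in> Vs i" "Es i c pc" "pc \<in> pendant_nbrs V E c"
    and "at_most_one_nbr_in E Q" "c \<in> Q" "nbhd V E c - Q \<subseteq> pendant_nbrs V E c"
  obtains a where "a \<in> Q"
    "\<And>x y. x \<in> Vs i \<Longrightarrow> y \<in> Vs i \<Longrightarrow> Es i x y \<Longrightarrow> x \<notin> {c, pc} \<Longrightarrow> y \<notin> {c, pc} \<Longrightarrow>
      clique_star_edge Q a a x y"
  using cointerval_edges_avoiding_pendant_edge[OF cover_cointerval[OF assms(1)] _ assms(7,8)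
      assms(2-5) assms(6)] cover_subgraph[OF assms(1)]
  by blast

lemma cobox_le_pred_if_clique_star_merged:
  assumes V': "V' \<subseteq> V" and Q: "is_clique Q E" "at_most_one_nbr_in E Q"
    and "g < k" "h < k" "h \<noteq> g" "a \<in> Q" "b \<in> Q"
    and merged: "\<And>f x y. f \<in> {g, h} \<Longrightarrow> x \<in> V' \<Longrightarrow> y \<in> V' \<Longrightarrow> x \<in> Vs f \<Longrightarrow> y \<in> Vs f \<Longrightarrow>
      Es f x y \<Longrightarrow> clique_star_edge Q a b x y"
  shows "cobox V' E \<le> k - 1"
proof -
  obtain F where F: "cointerval V' F" "\<forall>x\<in>V'. \<forall>y\<in>V'. F x y \<longrightarrow> E x y"
    "\<forall>x\<in>V'. \<forall>y\<in>V'. E x y \<longrightarrow> clique_star_edge Q a b x y \<longrightarrow> F x y"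
    using ex_cointerval_clique_star_graph[OF V' Q assms(7,8)] by blast
  show ?thesis
    by (rule cobox_le_pred_if_merged[OF V' assms(4-6) F(2,1)])
      (use F(3) assms(4,5) merged cover_subgraph in blast)
qed

context
  fixes V' Q u w t p q s
  assumes V': "V' \<subseteq> V" and Q: "is_clique Q E" "at_most_one_nbr_in E Q"
    and centres: "\<And>c. c \<in> {u, w, t} \<Longrightarrow> c \<in> Q \<and> nbhd V E c - Q \<subseteq> pendant_nbrs V E c"
    and uw: "u \<noteq> w" "u \<notin> V'" "w \<notin> V'" "t \<in> V'"
    and pendants: "p \<in> pendant_nbrs V E u" "q \<in> pendant_nbrs V E w" "s \<in> pendant_nbrs V E t"
    and outside_Q: "p \<notin> Q" "q \<notin> Q" "s \<notin> Q" and V'_pend: "p \<notin> V'" "q \<notin> V'" "s \<in> V'"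
begin

lemma cover_graph_edges_in_clique:
  assumes i: "i < k" "u \<in> Vs i" "p \<in> Vs i" "Es i u p" "w \<in> Vs i" "q \<in> Vs i" "Es i w q"
    and xy: "x \<in> V'" "y \<in> V'" "x \<in> Vs i" "y \<in> Vs i" "Es i x y" "x \<in> Q"
  shows "y \<in> Q"
proof (rule ccontr)
  assume "y \<notin> Q"
  have "E x y" using cover_subgraph[OF i(1)] xy(3-5) by blast
  then have "\<not> E u y" "\<not> E w y"
    using at_most_one_nbr_inD[OF Q(2) \<open>y \<notin> Q\<close> _ xy(6)] centres uw(2,3) xy(1) edge_sym by blast+
  moreover have "p \<noteq> w" "q \<noteq> u" using centres outside_Q(1,2) by blast+
  ultimately show False
    using cointerval_no_edge_beside_pendant_edges[OF cover_cointerval[OF i(1)] _ pendants(1,2)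
        uw(1) _ _ i(2,3,5,6) xy(3,4) i(4,7) xy(5)]
      cover_subgraph[OF i(1)] uw(2,3) V'_pend(1,2) xy(1,2) by blast
qed

lemma cobox_le_pred_if_both_pendant_edges_in_one_graph:
  assumes i: "i < k" "u \<in> Vs i" "p \<in> Vs i" "Es i u p" "w \<in> Vs i" "q \<in> Vs i" "Es i w q"
  shows "cobox V' E \<le> k - 1"
proof -
  have "E t s" and s_only: "\<And>z. E s z \<Longrightarrow> z = t"
    using pendants(3) unfolding mem_pendant_nbrs_iff by blast+
  obtain l where l: "l < k" "t \<in> Vs l" "s \<in> Vs l" "Es l t s"
    using ex_cover_graph_with_edge[OF \<open>E t s\<close>] .
  obtain al where "al \<in> Q" and l_edges: "\<And>x y. x \<in> Vs l \<Longrightarrow> y \<in> Vs l \<Longrightarrow> Es l x y \<Longrightarrow>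
      x \<notin> {t, s} \<Longrightarrow> y \<notin> {t, s} \<Longrightarrow> clique_star_edge Q al al x y"
    using cover_graph_centre[OF l pendants(3) Q(2)] centres[of t] by blast
  have "l \<noteq> i"
    using cover_graph_edges_in_clique[OF i uw(4) V'_pend(3)] l outside_Q(3) centres[of t] by blast
  show ?thesis
  proof (rule cobox_le_pred_if_clique_star_merged[OF V' Q i(1) l(1) \<open>l \<noteq> i\<close> _ \<open>al \<in> Q\<close>])
    show "t \<in> Q" using centres by blast
    fix f x y assume f: "f \<in> {i, l}" "x \<in> V'" "y \<in> V'" "x \<in> Vs f" "y \<in> Vs f" "Es f x y"
    show "clique_star_edge Q t al x y"
    proof (cases "f = i")
      case True
      have "E x y" using cover_subgraph[OF i(1)] f True by blast
      then have "Es i y x"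
        using cointerval_sym[OF cover_cointerval[OF i(1)]] f True edge_neq by blast
      moreover have "x \<in> Q \<or> y \<in> Q"
        using cover_graph_centre[OF i(1-4) pendants(1) Q(2)] centres[of u] f True uw(2) V'_pend(1)
        unfolding clique_star_edge_def by blast
      ultimately show ?thesis
        using cover_graph_edges_in_clique[OF i] f True unfolding clique_star_edge_def by blast
    next
      case False
      then have "f = l" using f(1) by blast
      have "E x y" using cover_subgraph[OF l(1)] f \<open>f = l\<close> by blast
      then have "x = s \<Longrightarrow> y = t" "y = s \<Longrightarrow> x = t" using s_only edge_sym by blast+
      with f \<open>f = l\<close> l_edges[of x y] outside_Q(3) centres[of t] show ?thesis
        unfolding clique_star_edge_def by blast
    qed
  qed
qed

lemma cobox_le_pred_if_three_pendant_centres: "cobox V' E \<le> k - 1"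
proof -
  have "E u p" "E w q" using pendants unfolding mem_pendant_nbrs_iff by blast+
  obtain i where i: "i < k" "u \<in> Vs i" "p \<in> Vs i" "Es i u p"
    using ex_cover_graph_with_edge[OF \<open>E u p\<close>] .
  obtain j where j: "j < k" "w \<in> Vs j" "q \<in> Vs j" "Es j w q"
    using ex_cover_graph_with_edge[OF \<open>E w q\<close>] .
  show ?thesis
  proof (cases "i = j")
    case True
    with i j show ?thesis by (intro cobox_le_pred_if_both_pendant_edges_in_one_graph) auto
  next
    case False
    obtain ai where "ai \<in> Q" and i_edges: "\<And>x y. x \<in> Vs i \<Longrightarrow> y \<in> Vs i \<Longrightarrow> Es i x y \<Longrightarrow>
        x \<notin> {u, p} \<Longrightarrow> y \<notin> {u, p} \<Longrightarrow> clique_star_edge Q ai ai x y"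
      using cover_graph_centre[OF i pendants(1) Q(2)] centres[of u] by blast
    obtain aj where "aj \<in> Q" and j_edges: "\<And>x y. x \<in> Vs j \<Longrightarrow> y \<in> Vs j \<Longrightarrow> Es j x y \<Longrightarrow>
        x \<notin> {w, q} \<Longrightarrow> y \<notin> {w, q} \<Longrightarrow> clique_star_edge Q aj aj x y"
      using cover_graph_centre[OF j pendants(2) Q(2)] centres[of w] by blast
    show ?thesis
    proof (rule cobox_le_pred_if_clique_star_merged[OF V' Q i(1) j(1) False[symmetric]
          \<open>ai \<in> Q\<close> \<open>aj \<in> Q\<close>])
      fix f x y assume "f \<in> {i, j}" "x \<in> V'" "y \<in> V'" "x \<in> Vs f" "y \<in> Vs f" "Es f x y"
      with i_edges j_edges uw(2,3) V'_pend(1,2) show "clique_star_edge Q ai aj x y"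
        unfolding clique_star_edge_def by blast
    qed
  qed
qed

end

end

section \<open>Block graphs\<close>

locale connected_block_graph = connected_graph +
  assumes block_graph: "block_graph V E"
begin

lemma block_clique: "is_block V E Q \<Longrightarrow> is_clique Q E"
  using block_graph unfolding block_graph_def by blast

lemma block_subset: "is_block V E Q \<Longrightarrow> Q \<subseteq> V"
  unfolding is_block_def by blast

lemma block_at_most_one_nbr: "is_block V E Q \<Longrightarrow> at_most_one_nbr_in E Q"
  unfolding at_most_one_nbr_in_def using block_clique_unique_nbr block_clique by blast

lemma ex_optimal_covered_graph: "\<exists>Vs Es. covered_graph V E (cobox V E) Vs Es"
proof -
  obtain Vs Es where "is_cointerval_cover V E (cobox V E) Vs Es"
    using optimal_cointerval_cover[OF sgraph] by blast
  then have "covered_graph V E (cobox V E) Vs Es"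
    by (rule covered_graph.intro[OF simple_graph_axioms covered_graph_axioms.intro])
  then show ?thesis by blast
qed

lemma no_nbr_outside_if_not_cut_vertex:
  assumes "is_block V E Q" "card Q \<ge> 2" "c \<in> Q" "\<not> cut_vertex V E c" "z \<in> V - Q"
  shows "\<not> E c z"
proof
  assume "E c z"
  have "Q \<noteq> {c}" using assms(2) by auto
  then obtain d where "d \<in> Q" "d \<noteq> c" using assms(3) by blast
  with cut_vertex_if_nbr_outside_block[OF assms(1) block_clique[OF assms(1)] assms(3)] assms(4,5)
    \<open>E c z\<close> show False by blast
qed

lemma cobox_Diff_large_leaf_block:
  assumes "leaf_block V E Q" "card Q \<ge> 3"
  shows "cobox (V - Q) E \<le> cobox V E - 1"
proof -
  let ?C = "cutvs_in V E Q"
  have blk: "is_block V E Q" and "card ?C = 1" using assms(1) unfolding leaf_block_def by blast+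
  have "finite Q" using block_subset[OF blk] finite_V finite_subset by blast
  moreover have "?C \<subseteq> Q" unfolding cutvs_in_def by blast
  ultimately have "card (Q - ?C) = card Q - 1"
    using card_Diff_subset[of ?C Q] finite_subset \<open>card ?C = 1\<close> by metis
  with assms(2) have "card (Q - ?C) \<ge> 2" by linarith
  then have "Q - ?C \<noteq> {}" by (metis card.empty not_numeral_le_zero)
  then obtain a where a: "a \<in> Q - ?C" by blast
  moreover have "Q - ?C \<noteq> {a}" using \<open>card (Q - ?C) \<ge> 2\<close> by auto
  ultimately obtain b where ab: "a \<in> Q - ?C" "b \<in> Q - ?C" "a \<noteq> b" by blast
  have "\<not> cut_vertex V E a" "\<not> cut_vertex V E b" using ab unfolding cutvs_in_def by blast+
  then have isolated: "\<not> E a z \<and> \<not> E b z" if "z \<in> V - Q" for z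
    using no_nbr_outside_if_not_cut_vertex[OF blk] assms(2) ab that by simp
  obtain Vs Es where "covered_graph V E (cobox V E) Vs Es"
    using ex_optimal_covered_graph by blast
  moreover have "E a b" using ab block_clique[OF blk] unfolding is_clique_def by blast
  ultimately show ?thesis
    using covered_graph.cobox_le_pred_if_isolated_edge[of V E _ Vs Es "V - Q" a b] ab isolated
    by blast
qed

lemma leaf_block_edge_pendant:
  assumes "leaf_block V E B" "card B < 3" "u \<in> cutvs_in V E B" "z \<in> B" "z \<noteq> u"
  shows "z \<in> pendant_nbrs V E u"
proof -
  have blk: "is_block V E B" "is_clique B E" and "u \<in> B"
    using assms(1,3) block_clique unfolding leaf_block_def cutvs_in_def by blast+
  have "finite B" using block_subset[OF blk(1)] finite_V finite_subset by blast
  have "B = {u, z}"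
  proof -
    have "card {u, z} = 2" "{u, z} \<subseteq> B" using assms(4,5) \<open>u \<in> B\<close> by auto
    with assms(2) \<open>finite B\<close> show ?thesis
      by (metis card_seteq less_Suc_eq_le numeral_3_eq_3 numeral_2_eq_2)
  qed
  have "z' = u" if "E z z'" for z'
  proof (rule ccontr)
    assume "z' \<noteq> u"
    then have "z' \<in> V - B" using \<open>B = {u, z}\<close> edge_neq[OF that] edge_in_V(2)[OF that] by blast
    then have "cut_vertex V E z"
      using cut_vertex_if_nbr_outside_block[OF blk assms(4) \<open>u \<in> B\<close>] assms(5) that by blast
    then have "{u, z} \<subseteq> cutvs_in V E B" using assms(3,4) unfolding cutvs_in_def by blast
    moreover have "finite (cutvs_in V E B)" using \<open>finite B\<close> unfolding cutvs_in_def by simp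
    ultimately have "card {u, z} \<le> 1"
      using assms(1) card_mono unfolding leaf_block_def by metis
    with assms(5) show False by simp
  qed
  moreover have "E u z"
    using blk(2) \<open>u \<in> B\<close> assms(4) assms(5)[symmetric] unfolding is_clique_def by blast
  ultimately show ?thesis unfolding mem_pendant_nbrs_iff by blast
qed

end

locale near_leaf_setting = connected_block_graph +
  fixes Q :: "'a set" and v :: 'a
  assumes near_leaf: "near_leaf_block V E Q"
    and anchor_choice: "if \<exists>c. anchor V E Q c then anchor V E Q v else v \<in> cutvs_in V E Q"
    and small_leaves: "\<And>B. leaf_block V E B \<Longrightarrow> card B < 3"
begin

lemma Q_block: "is_block V E Q"
  using near_leaf unfolding near_leaf_block_def internal_block_def by blast

lemma Q_clique: "is_clique Q E"
  using block_clique[OF Q_block] .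

lemma two_cut_vertices: "card (cutvs_in V E Q) \<ge> 2"
  using near_leaf unfolding near_leaf_block_def internal_block_def by blast

lemma v_in_Q: "v \<in> Q"
proof (cases "\<exists>c. anchor V E Q c")
  case True
  with anchor_choice have "anchor V E Q v" by simp
  then obtain B where "B \<inter> Q = {v}" unfolding anchor_def by blast
  then show ?thesis by blast
next
  case False
  with anchor_choice show ?thesis unfolding cutvs_in_def by simp
qed

text \<open>Blocks meeting Q in a cut-vertex other than v are leaves: an internal one would make its
  common vertex with Q the anchor, which is v.\<close>
lemma nbr_block_is_leaf:
  assumes "u \<in> cutvs_in V E Q" "u \<noteq> v" "is_block V E B" "u \<in> B" "B \<noteq> Q"
  shows "leaf_block V E B"
proof (rule ccontr)
  assume not_leaf: "\<not> leaf_block V E B"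
  have "u \<in> Q" "cut_vertex V E u" using assms(1) unfolding cutvs_in_def by blast+
  then have nbrs: "block_neighbours V E Q B"
    using Q_block assms(3-5) unfolding block_neighbours_def by blast
  have "finite B" using block_subset[OF assms(3)] finite_V by (rule finite_subset)
  then have "finite (cutvs_in V E B)" unfolding cutvs_in_def by simp
  moreover have "u \<in> cutvs_in V E B"
    using \<open>cut_vertex V E u\<close> assms(4) unfolding cutvs_in_def by blast
  ultimately have "card (cutvs_in V E B) > 0" by (auto simp: card_gt_0_iff)
  with not_leaf assms(3) have internal: "internal_block V E B"
    unfolding leaf_block_def internal_block_def by simp
  obtain c where c: "\<forall>B'. block_neighbours V E Q B' \<and> internal_block V E B' \<longrightarrow> B' \<inter> Q = {c}"
    using near_leaf nbrs not_leaf unfolding near_leaf_block_def by blast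
  with nbrs internal near_leaf have "anchor V E Q c" unfolding anchor_def by blast
  then have "\<exists>c. anchor V E Q c" by blast
  with anchor_choice have "anchor V E Q v" by simp
  with nbrs internal have "B \<inter> Q = {v}" unfolding anchor_def by blast
  with assms(2,4) \<open>u \<in> Q\<close> show False by blast
qed

lemma outside_nbrs_pendant:
  assumes "u \<in> cutvs_in V E Q - {v}"
  shows "nbhd V E u - Q \<subseteq> pendant_nbrs V E u"
proof
  fix z assume "z \<in> nbhd V E u - Q"
  then have "E u z" "z \<notin> Q" by (simp_all add: mem_nbhd_iff)
  then obtain B where B: "is_block V E B" "u \<in> B" "z \<in> B"
    using ex_block_containing_edge by blast
  with \<open>z \<notin> Q\<close> assms have "leaf_block V E B"
    using nbr_block_is_leaf by blast
  moreover have "u \<in> cutvs_in V E B" using assms B(2) unfolding cutvs_in_def by blast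
  ultimately show "z \<in> pendant_nbrs V E u"
    using leaf_block_edge_pendant small_leaves B(3) edge_neq[OF \<open>E u z\<close>] by metis
qed

lemma ex_pendant_outside:
  assumes "u \<in> cutvs_in V E Q - {v}"
  obtains p where "p \<in> pendant_nbrs V E u" "p \<notin> Q"
proof -
  have "u \<in> Q" "cut_vertex V E u" using assms unfolding cutvs_in_def by blast+
  then obtain z where "z \<in> V - Q" "E u z"
    using cut_vertex_has_nbr_outside[OF Q_clique _ v_in_Q] assms by blast
  then have "z \<in> nbhd V E u - Q" by (simp add: mem_nbhd_iff)
  with outside_nbrs_pendant[OF assms] that show thesis by blast
qed

lemma cut_vertex_in_Q: "u \<in> cutvs_in V E Q \<Longrightarrow> u \<in> Q"
  unfolding cutvs_in_def by blast

lemma cobox_Diff_big_ant: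
  assumes u: "u \<in> cutvs_in V E Q - {v}"
  shows "cobox (V - big_ant_vertices V E Q u u) E \<le> cobox V E - 1"
proof -
  obtain p where p: "p \<in> pendant_nbrs V E u" "p \<notin> Q"
    using ex_pendant_outside[OF u] .
  then have "E u p" "\<And>z. E p z \<Longrightarrow> z = u" unfolding mem_pendant_nbrs_iff by blast+
  have R: "big_ant_vertices V E Q u u = Q \<union> nbhd V E u"
    unfolding big_ant_vertices_def by blast
  obtain Vs Es where cg: "covered_graph V E (cobox V E) Vs Es"
    using ex_optimal_covered_graph by blast
  show ?thesis
    unfolding R
  proof (rule covered_graph.cobox_le_pred_if_isolated_edge[OF cg _ \<open>E u p\<close>])
    show "u \<notin> V - (Q \<union> nbhd V E u)" "p \<notin> V - (Q \<union> nbhd V E u)"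
      using cut_vertex_in_Q u \<open>E u p\<close> mem_nbhd_iff by blast+
    show "\<not> E u z \<and> \<not> E p z" if "z \<in> V - (Q \<union> nbhd V E u)" for z
      using that \<open>\<And>z. E p z \<Longrightarrow> z = u\<close> cut_vertex_in_Q u mem_nbhd_iff by blast
  qed blast
qed

lemma cobox_Diff_big_ant_pair:
  assumes u: "u \<in> cutvs_in V E Q - {v}" and w: "w \<in> cutvs_in V E Q - {v}" and "u \<noteq> w"
  shows "cobox (V - (big_ant_vertices V E Q u w - {v})) E \<le> cobox V E - 1"
proof -
  obtain p where p: "p \<in> pendant_nbrs V E u" "p \<notin> Q"
    using ex_pendant_outside[OF u] .
  obtain q where q: "q \<in> pendant_nbrs V E w" "q \<notin> Q"
    using ex_pendant_outside[OF w] .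
  have "E u p" "E w q" using p q unfolding mem_pendant_nbrs_iff by blast+
  have "u \<in> Q" "w \<in> Q" using u w cut_vertex_in_Q by blast+
  then have "E u w" "E u v" "E w v"
    using Q_clique v_in_Q u w \<open>u \<noteq> w\<close> unfolding is_clique_def by blast+
  let ?V' = "V - (Q \<union> nbhd V E u \<union> nbhd V E w - {v})"
  have R: "big_ant_vertices V E Q u w - {v} = Q \<union> nbhd V E u \<union> nbhd V E w - {v}"
    unfolding big_ant_vertices_def by blast
  obtain Vs Es where cg: "covered_graph V E (cobox V E) Vs Es"
    using ex_optimal_covered_graph by blast
  show ?thesis
    unfolding R
  proof (rule covered_graph.cobox_le_pred_if_pendant_star[OF cg _ _ _ _ _ _
        \<open>E u w\<close> \<open>E u v\<close> \<open>E w v\<close> p(1) q(1)])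
    show "v \<in> ?V'" using v_in_Q block_subset[OF Q_block] by blast
    show "u \<notin> ?V'" "w \<notin> ?V'" using \<open>u \<in> Q\<close> \<open>w \<in> Q\<close> u w by blast+
    show "p \<notin> ?V'" "q \<notin> ?V'"
      using \<open>E u p\<close> \<open>E w q\<close> p(2) q(2) v_in_Q mem_nbhd_iff by blast+
    show "\<not> E u z \<and> \<not> E w z" if "z \<in> ?V'" "z \<noteq> v" for z
      using that mem_nbhd_iff by blast
  qed blast
qed

lemma cobox_Diff_pendant_stars:
  assumes u: "u \<in> cutvs_in V E Q - {v}" and w: "w \<in> cutvs_in V E Q - {v}" and "u \<noteq> w"
    and "card (cutvs_in V E Q) \<ge> 4"
  shows "cobox (V - (pendant_nbrs V E u \<union> pendant_nbrs V E w \<union> {u, w})) E \<le> cobox V E - 1"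
proof -
  let ?V' = "V - (pendant_nbrs V E u \<union> pendant_nbrs V E w \<union> {u, w})"
  have "\<not> cutvs_in V E Q \<subseteq> {u, w, v}"
  proof
    assume "cutvs_in V E Q \<subseteq> {u, w, v}"
    then have "card (cutvs_in V E Q) \<le> card {u, w, v}" by (simp add: card_mono)
    also have "\<dots> \<le> 3" by (simp add: card_insert_if)
    finally show False using assms(4) by simp
  qed
  then obtain t where t: "t \<in> cutvs_in V E Q - {v}" "t \<noteq> u" "t \<noteq> w" by blast
  obtain p where p: "p \<in> pendant_nbrs V E u" "p \<notin> Q"
    using ex_pendant_outside[OF u] .
  obtain q where q: "q \<in> pendant_nbrs V E w" "q \<notin> Q"
    using ex_pendant_outside[OF w] .
  obtain s where s: "s \<in> pendant_nbrs V E t" "s \<notin> Q"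
    using ex_pendant_outside[OF t(1)] .
  have "u \<in> Q" "w \<in> Q" "t \<in> Q" using u w t cut_vertex_in_Q by blast+
  then have "E t u" "E t w"
    using Q_clique t(2,3) unfolding is_clique_def by blast+
  have centres: "c \<in> Q \<and> nbhd V E c - Q \<subseteq> pendant_nbrs V E c" if "c \<in> {u, w, t}" for c
    using that u w t outside_nbrs_pendant cut_vertex_in_Q by blast
  have not_pendant: "x \<notin> pendant_nbrs V E c" if "E x y" "y \<noteq> c" for x y c
    using that unfolding mem_pendant_nbrs_iff by blast
  have "t \<in> ?V'"
    using \<open>t \<in> Q\<close> block_subset[OF Q_block] not_pendant[OF \<open>E t u\<close>] not_pendant[OF \<open>E t w\<close>]
      \<open>u \<noteq> w\<close> \<open>u \<noteq> w\<close>[symmetric] t(2,3) by blast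
  moreover have "s \<in> ?V'"
  proof -
    have "E s t" using s(1) edge_sym unfolding mem_pendant_nbrs_iff by blast
    then show ?thesis
      using not_pendant[of s t] s(2) \<open>u \<in> Q\<close> \<open>w \<in> Q\<close> t(2,3) edge_in_V by blast
  qed
  moreover obtain Vs Es where "covered_graph V E (cobox V E) Vs Es"
    using ex_optimal_covered_graph by blast
  ultimately show ?thesis
    using covered_graph.cobox_le_pred_if_three_pendant_centres
        [of V E "cobox V E" Vs Es ?V' Q u w t p q s]
      Q_clique block_at_most_one_nbr[OF Q_block] centres \<open>u \<noteq> w\<close> p q s
    by blast
qed

end

lemma (in connected_block_graph) cobox_Diff_admissible_near_leaf:
  assumes "\<not> (is_clique V E \<or> is_star V E)" "\<not> (\<exists>Q. leaf_block V E Q \<and> card Q \<ge> 3)"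
    and "admissible_R V E R"
  shows "cobox (V - R) E \<le> cobox V E - 1"
proof -
  obtain Q v where "near_leaf_block V E Q"
    and "if \<exists>c. anchor V E Q c then anchor V E Q v else v \<in> cutvs_in V E Q"
    and R: "if card (cutvs_in V E Q) = 2
        then \<exists>u. u \<in> cutvs_in V E Q \<and> u \<noteq> v \<and> R = big_ant_vertices V E Q u u
        else \<exists>u w. u \<noteq> w \<and> u \<in> cutvs_in V E Q - {v} \<and> w \<in> cutvs_in V E Q - {v} \<and>
          R = (if card (cutvs_in V E Q) = 3 then big_ant_vertices V E Q u w - {v}
               else pendant_nbrs V E u \<union> pendant_nbrs V E w \<union> {u, w})"
    using assms(3) unfolding admissible_R_def if_not_P[OF assms(1)] if_not_P[OF assms(2)] by blast
  then interpret near_leaf_setting V E Q v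
    using assms(2) by unfold_locales (auto simp: not_le)
  show ?thesis
    using R two_cut_vertices cobox_Diff_big_ant cobox_Diff_big_ant_pair cobox_Diff_pendant_stars
    by (auto split: if_splits)
qed

theorem lemma12:
  fixes V :: "'a set" and E :: "'a \<Rightarrow> 'a \<Rightarrow> bool" and R :: "'a set"
  assumes "sgraph V E"
    and "graph_connected V E"
    and "block_graph V E"
    and "edges V E \<noteq> {}"
    and "admissible_R V E R"
  shows "cobox (V - R) E \<le> cobox V E - 1"
proof -
  interpret connected_block_graph V E
    using assms(1-3) by unfold_locales
  consider (trivial) "is_clique V E \<or> is_star V E"
    | (large_leaf) "\<not> (is_clique V E \<or> is_star V E)" "\<exists>Q. leaf_block V E Q \<and> card Q \<ge> 3"
    | (near_leaf) "\<not> (is_clique V E \<or> is_star V E)" "\<not> (\<exists>Q. leaf_block V E Q \<and> card Q \<ge> 3)"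
    by blast
  then show ?thesis
  proof cases
    case trivial
    with assms(5) have "edges (V - R) E = {}"
      unfolding admissible_R_def edges_def adj_in_def by simp
    then show ?thesis by (simp add: cobox_eq_0)
  next
    case large_leaf
    with assms(5) cobox_Diff_large_leaf_block show ?thesis
      unfolding admissible_R_def by auto
  next
    case near_leaf
    from near_leaf assms(5) show ?thesis by (rule cobox_Diff_admissible_near_leaf)
  qed
qed

end
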